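(* Let $R$ be $\mathbb{Z}$ or $\mathbb{Z}/m\mathbb{Z}$ with $m\ge2$, and let $\Lambda$ be the weight lattice of a semisimple root system all of whose simple components are of type ${\rm A}$ or type ${\rm C}$, with Weyl group $W$ and fundamental weights $\omega_1,\ldots,\omega_n$. For $i=1,\ldots,n$ let $\rho_i=\sum_{\lambda\in W(\omega_i)}e^{\lambda}-|W(\omega_i)|\in R[\Lambda]$. Then the $n$-tuple $(\rho_1,\ldots,\rho_n)$ satisfies the generalized flatness condition with respect to some $\mathbb{Z}$-basis of $\Lambda$.
   Context: For a free abelian group $\Lambda$ with basis $x_1,\ldots,x_n$, $R[\Lambda]$ is identified with $R[x_1^{\pm1},\ldots,x_n^{\pm1}]$ and $\Lambda_i$ is the subgroup spanned by $x_1,\ldots,x_i$. A polynomial $p\in R[\Lambda_i]$ is a divisor with respect to $x_i$ if, writing $p=p_kx_i^k+\cdots+p_mx_i^m$ with $p_j\in R[\Lambda_{i-1}]$, $p_k\ne0$, the leading coefficient $p_k$ is a monic monomial in $x_1,\ldots,x_{i-1}$. An $n$-tuple $(q_1,\ldots,q_n)$ satisfies the flatness condition (w.r.t. the basis) if $q_i\in R[\Lambda_i]$ and $q_i$ is a divisor with respect to $x_i$ for every $i$; it satisfies the generalized flatness condition if there exists $A\in GL_n(R[\Lambda])$ such that $(q_1,\ldots,q_n)A$ satisfies the flatness condition. For type ${\rm A}_n$: $\Lambda=\mathbb{Z}^{n+1}/\mathbb{Z}(e_1+\cdots+e_{n+1})$, $\omega_i=\bar e_1+\cdots+\bar e_i$,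 $W=S_{n+1}$ permuting the $e_j$. For type ${\rm C}_n$: $\Lambda=\mathbb{Z}^n$, $\omega_i=e_1+\cdots+e_i$, $W$ acts by permutations and sign changes of the $e_j$. *)

theory Defs
  imports "HOL-Library.Poly_Mapping" "HOL-Library.Function_Algebras"
          "HOL-Combinatorics.Permutations"
begin

datatype cartan_type = TypeA | TypeC

text \<open>A semisimple root system with components of type A or C is given by a list of
  components (type, rank).  Weights live in the ambient group of functions
  (c, j) \<mapsto> integer: component c, coordinate e_j.
  Type A_r: Z^(r+1)/Z(e_1+...+e_(r+1)); a class is represented by its unique
  representative with (r+1)-st coordinate 0, so coordinates j = 1..r.
  Type C_r: Z^r, coordinates j = 1..r.\<close>

type_synonym weight = "nat \<times> nat \<Rightarrow> int"

definition weight_lattice :: "(cartan_type \<times> nat) list \<Rightarrow> weight set" where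
  "weight_lattice comps =
     {v. \<forall>c j. v (c, j) \<noteq> 0 \<longrightarrow> c < length comps \<and> 1 \<le> j \<and> j \<le> snd (comps ! c)}"

text \<open>number of coordinates e_j permuted by the Weyl group of a component\<close>
definition n_coords :: "cartan_type \<times> nat \<Rightarrow> nat" where
  "n_coords tr = (case fst tr of TypeA \<Rightarrow> snd tr + 1 | TypeC \<Rightarrow> snd tr)"

text \<open>Weyl group element: per component a permutation sigma of {1..n_coords} and
  signs eps (all +1 in type A).  It acts by e_j \<mapsto> eps_j e_(sigma j).\<close>
definition weyl_group :: "(cartan_type \<times> nat) list \<Rightarrow>
    ((nat \<Rightarrow> nat \<Rightarrow> nat) \<times> (nat \<Rightarrow> nat \<Rightarrow> int)) set" where
  "weyl_group comps = {(\<sigma>, \<epsilon>). \<forall>c < length comps.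
      \<sigma> c permutes {1..n_coords (comps ! c)} \<and> (\<forall>j. \<epsilon> c j \<in> {1, -1}) \<and>
      (fst (comps ! c) = TypeA \<longrightarrow> (\<forall>j. \<epsilon> c j = 1))}"

definition weyl_act :: "(cartan_type \<times> nat) list \<Rightarrow>
    ((nat \<Rightarrow> nat \<Rightarrow> nat) \<times> (nat \<Rightarrow> nat \<Rightarrow> int)) \<Rightarrow> weight \<Rightarrow> weight" where
  "weyl_act comps w v = (\<lambda>(c, k).
     if c < length comps \<and> 1 \<le> k \<and> k \<le> snd (comps ! c) then
       (case fst (comps ! c) of
          TypeA \<Rightarrow> v (c, inv (fst w c) k) - v (c, inv (fst w c) (snd (comps ! c) + 1))
        | TypeC \<Rightarrow> snd w c (inv (fst w c) k) * v (c, inv (fst w c) k))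
     else 0)"

definition weyl_orbit :: "(cartan_type \<times> nat) list \<Rightarrow> weight \<Rightarrow> weight set" where
  "weyl_orbit comps v = {weyl_act comps w v | w. w \<in> weyl_group comps}"

definition fund_weight :: "nat \<Rightarrow> nat \<Rightarrow> weight" where
  "fund_weight c i = (\<lambda>(c', j). if c' = c \<and> 1 \<le> j \<and> j \<le> i then 1 else 0)"

definition fund_weights :: "(cartan_type \<times> nat) list \<Rightarrow> weight list" where
  "fund_weights comps =
     concat (map (\<lambda>c. map (fund_weight c) [1..<snd (comps ! c) + 1]) [0..<length comps])"

text \<open>R[Lambda] inside the group ring of the ambient group\<close>
definition group_ring :: "'g set \<Rightarrow> ('g \<Rightarrow>\<^sub>0 'r::zero) set" where
  "group_ring L = {p. Poly_Mapping.keys p \<subseteq> L}"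

definition rho :: "(cartan_type \<times> nat) list \<Rightarrow> weight \<Rightarrow> (weight \<Rightarrow>\<^sub>0 'r::comm_ring_1)" where
  "rho comps \<omega> = (\<Sum>x\<in>weyl_orbit comps \<omega>. Poly_Mapping.single x 1)
                   - of_nat (card (weyl_orbit comps \<omega>))"

definition zsmult :: "int \<Rightarrow> weight \<Rightarrow> weight" where
  "zsmult k v = (\<lambda>x. k * v x)"

text \<open>Lambda_i: subgroup spanned by the first i basis vectors (0-indexed list)\<close>
definition span_first :: "weight list \<Rightarrow> nat \<Rightarrow> weight set" where
  "span_first b i = {(\<Sum>j<i. zsmult (k j) (b ! j)) | k. True}"

definition is_Z_basis :: "weight set \<Rightarrow> weight list \<Rightarrow> bool" where
  "is_Z_basis L b \<longleftrightarrow> set b \<subseteq> L \<and>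
     (\<forall>x\<in>L. \<exists>!k. (\<forall>i. length b \<le> i \<longrightarrow> k i = 0) \<and>
                 x = (\<Sum>i<length b. zsmult (k i) (b ! i)))"

text \<open>q is a divisor w.r.t. x_i = e^(b!i): writing q = sum_j p_j x_i^j with
  p_j in R[Lambda_(i-1)], the lowest nonzero p_k is a monic (Laurent) monomial x^mu.\<close>
definition is_divisor :: "weight list \<Rightarrow> nat \<Rightarrow> (weight \<Rightarrow>\<^sub>0 'r::comm_ring_1) \<Rightarrow> bool" where
  "is_divisor b i q \<longleftrightarrow>
     (\<exists>k \<mu>. \<mu> \<in> span_first b i \<and> Poly_Mapping.lookup q (\<mu> + zsmult k (b ! i)) = 1 \<and>
        (\<forall>x\<in>Poly_Mapping.keys q. \<forall>\<mu>' k'. \<mu>' \<in> span_first b i \<and> x = \<mu>' + zsmult k' (b ! i) \<longrightarrow>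
            k \<le> k' \<and> (k' = k \<longrightarrow> \<mu>' = \<mu>)))"

definition flat :: "weight list \<Rightarrow> (nat \<Rightarrow> (weight \<Rightarrow>\<^sub>0 'r::comm_ring_1)) \<Rightarrow> bool" where
  "flat b q \<longleftrightarrow> (\<forall>i < length b.
      q i \<in> group_ring (span_first b (Suc i)) \<and> is_divisor b i (q i))"

definition in_GL :: "nat \<Rightarrow> weight set \<Rightarrow> (nat \<Rightarrow> nat \<Rightarrow> (weight \<Rightarrow>\<^sub>0 'r::comm_ring_1)) \<Rightarrow> bool" where
  "in_GL n L A \<longleftrightarrow> (\<forall>i<n. \<forall>j<n. A i j \<in> group_ring L) \<and>
     (\<exists>B. (\<forall>i<n. \<forall>j<n. B i j \<in> group_ring L) \<and>
        (\<forall>i<n. \<forall>j<n. (\<Sum>k<n. A i k * B k j) = (if i = j then 1 else 0)) \<and>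
        (\<forall>i<n. \<forall>j<n. (\<Sum>k<n. B i k * A k j) = (if i = j then 1 else 0)))"

definition gen_flat :: "weight set \<Rightarrow> weight list \<Rightarrow> (nat \<Rightarrow> (weight \<Rightarrow>\<^sub>0 'r::comm_ring_1)) \<Rightarrow> bool" where
  "gen_flat L b q \<longleftrightarrow>
     (\<exists>A. in_GL (length b) L A \<and> flat b (\<lambda>j. \<Sum>i<length b. q i * A i j))"

end

theory Submission
  imports Defs
begin

(*
  Use the coordinate vectors e_1, ..., e_r of each component as basis of \<Lambda> (in type A the
  images of e_1, ..., e_r in the quotient, so that e_(r+1) = -(e_1 + ... + e_r)).  With
  z_j = e^(e_j) for j \<le> r + 1 in type A and z_j = e^(e_j) + e^(-e_j) for j \<le> r in type C, the
  orbit sum of \<omega>_i is the elementary symmetric polynomial \<sigma>_i(z), so that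
  \<Sum>_i \<rho>_i t^i = \<Prod>_j (1 + z_j t) - c(t) for a polynomial c(t) with integer coefficients.
  Dividing this generating series by 1 + z_1 t, ..., 1 + z_r t is a sequence of unitriangular
  column operations over R[\<Lambda>]; reversing the order of the resulting tuple and fixing signs,
  the p-th entry becomes \<plusminus>(\<sigma>_(r-p)(z_(p+2), ...) - coefficient of t^(r-p) in
  c(t) / \<Prod>_(j\<le>p+1) (1 + z_j t)).  It involves e_1, ..., e_(p+1) only, and its terms of lowest
  e_(p+1)-degree reduce to one monomial with coefficient \<plusminus>1: e^(-(e_1 + ... + e_(p+1))) in
  type A and e^(-(r-p) e_(p+1)) in type C.  Different components do not interact, so the column
  operations assemble into a block-diagonal matrix.
*)

section \<open>Column operations over a subring\<close>

definition is_subring :: "'a::comm_ring_1 set \<Rightarrow> bool" where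
  "is_subring Q \<longleftrightarrow> 0 \<in> Q \<and> 1 \<in> Q \<and> (\<forall>a\<in>Q. \<forall>b\<in>Q. a + b \<in> Q \<and> a * b \<in> Q \<and> - a \<in> Q)"

lemma is_subring_0: "is_subring Q \<Longrightarrow> 0 \<in> Q"
  and is_subring_1: "is_subring Q \<Longrightarrow> 1 \<in> Q"
  and is_subring_add: "is_subring Q \<Longrightarrow> a \<in> Q \<Longrightarrow> b \<in> Q \<Longrightarrow> a + b \<in> Q"
  and is_subring_mult: "is_subring Q \<Longrightarrow> a \<in> Q \<Longrightarrow> b \<in> Q \<Longrightarrow> a * b \<in> Q"
  and is_subring_uminus: "is_subring Q \<Longrightarrow> a \<in> Q \<Longrightarrow> - a \<in> Q"
  by (auto simp: is_subring_def)

lemma is_subring_diff: "is_subring Q \<Longrightarrow> a \<in> Q \<Longrightarrow> b \<in> Q \<Longrightarrow> a - b \<in> Q"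
  using is_subring_add[of Q a "- b"] is_subring_uminus[of Q b] by simp

lemma is_subring_sum: "is_subring Q \<Longrightarrow> (\<And>i. i \<in> I \<Longrightarrow> f i \<in> Q) \<Longrightarrow> sum f I \<in> Q"
  by (induction I rule: infinite_finite_induct) (auto intro: is_subring_0 is_subring_add)

lemma is_subring_power: "is_subring Q \<Longrightarrow> a \<in> Q \<Longrightarrow> a ^ k \<in> Q"
  by (induction k) (auto intro: is_subring_1 is_subring_mult)

lemma is_subring_of_nat: "is_subring Q \<Longrightarrow> of_nat k \<in> Q"
  by (induction k) (auto intro: is_subring_0 is_subring_1 is_subring_add)

definition invertible_in :: "'a::comm_ring_1 set \<Rightarrow> nat \<Rightarrow> (nat \<Rightarrow> nat \<Rightarrow> 'a) \<Rightarrow> bool" where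
  "invertible_in Q n A \<longleftrightarrow> (\<forall>i<n. \<forall>j<n. A i j \<in> Q) \<and>
     (\<exists>B. (\<forall>i<n. \<forall>j<n. B i j \<in> Q) \<and>
        (\<forall>i<n. \<forall>j<n. (\<Sum>k<n. A i k * B k j) = (if i = j then 1 else 0)) \<and>
        (\<forall>i<n. \<forall>j<n. (\<Sum>k<n. B i k * A k j) = (if i = j then 1 else 0)))"

lemma in_GL_iff_invertible_in: "in_GL n L A = invertible_in (group_ring L) n A"
  unfolding in_GL_def invertible_in_def by simp

definition GL_equiv :: "'a::comm_ring_1 set \<Rightarrow> nat \<Rightarrow> (nat \<Rightarrow> 'a) \<Rightarrow> (nat \<Rightarrow> 'a) \<Rightarrow> bool" where
  "GL_equiv Q n q q' \<longleftrightarrow> (\<exists>A. invertible_in Q n A \<and> (\<forall>j<n. q' j = (\<Sum>i<n. q i * A i j)))"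

lemma sum_delta_mult_left:
  assumes "i < (n::nat)"
  shows "(\<Sum>k<n. (if i = k then 1 else 0) * C k l) = (C i l :: 'a::comm_ring_1)"
  by (subst sum.cong[OF refl, of _ _ "\<lambda>k. if i = k then C k l else 0"]) (auto simp: assms)

lemma sum_mult_delta_right:
  assumes "l < (n::nat)"
  shows "(\<Sum>k<n. C i k * (if k = l then 1 else 0)) = (C i l :: 'a::comm_ring_1)"
  by (subst sum.cong[OF refl, of _ _ "\<lambda>k. if k = l then C i k else 0"]) (auto simp: assms)

lemma sum_mat_mult_assoc:
  "(\<Sum>k<(n::nat). (\<Sum>j<n. A i j * B j k) * C k l) =
   (\<Sum>j<n. A i j * (\<Sum>k<n. B j k * C k l :: 'a::comm_ring_1))"
proof -
  have "(\<Sum>k<n. (\<Sum>j<n. A i j * B j k) * C k l) = (\<Sum>k<n. \<Sum>j<n. A i j * (B j k * C k l))"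
    by (simp add: sum_distrib_right mult.assoc)
  also have "\<dots> = (\<Sum>j<n. \<Sum>k<n. A i j * (B j k * C k l))"
    by (rule sum.swap)
  also have "\<dots> = (\<Sum>j<n. A i j * (\<Sum>k<n. B j k * C k l))"
    by (simp add: sum_distrib_left)
  finally show ?thesis .
qed

lemma GL_equiv_refl: assumes "is_subring Q" shows "GL_equiv Q n q q"
proof -
  let ?I = "\<lambda>i j. if i = j then 1 else 0 :: 'a"
  have "(\<Sum>k<n. ?I i k * ?I k j) = ?I i j" if "i < n" for i j
    using that by (rule sum_delta_mult_left)
  then have "invertible_in Q n ?I" unfolding invertible_in_def
    by (intro conjI exI[of _ ?I]) (auto simp: is_subring_0[OF assms] is_subring_1[OF assms])
  moreover have "q j = (\<Sum>i<n. q i * ?I i j)" if "j < n" for j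
    using sum_mult_delta_right[OF that, of "\<lambda>_ i. q i" 0] by simp
  ultimately show ?thesis unfolding GL_equiv_def by blast
qed

lemma GL_equiv_cong:
  assumes "GL_equiv Q n q q'" "\<And>j. j < n \<Longrightarrow> q j = p j" "\<And>j. j < n \<Longrightarrow> q' j = p' j"
  shows "GL_equiv Q n p p'"
proof -
  obtain A where A: "invertible_in Q n A" "\<forall>j<n. q' j = (\<Sum>i<n. q i * A i j)"
    using assms(1) unfolding GL_equiv_def by blast
  have "p' j = (\<Sum>i<n. p i * A i j)" if "j < n" for j
    using A(2) that assms(2,3) by (auto intro!: sum.cong)
  then show ?thesis unfolding GL_equiv_def using A(1) by blast
qed

lemma GL_equiv_zero_length: "is_subring Q \<Longrightarrow> GL_equiv Q 0 q q'"
  by (rule GL_equiv_cong[OF GL_equiv_refl, of Q 0 q]) auto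

lemma mat_mult_inverse:
  assumes "\<forall>i<n. \<forall>j<n. (\<Sum>k<n. A i k * B k j) = (if i = j then 1 else 0)"
    and "\<forall>i<n. \<forall>j<n. (\<Sum>k<n. A' i k * B' k j) = (if i = j then 1 else 0)"
    and "i < (n::nat)" "l < n"
  shows "(\<Sum>k<n. (\<Sum>j<n. A i j * A' j k) * (\<Sum>j<n. B' k j * B j l)) =
         (if i = l then 1 else (0::'a::comm_ring_1))"
proof -
  have "(\<Sum>k<n. (\<Sum>j<n. A i j * A' j k) * (\<Sum>j<n. B' k j * B j l)) =
        (\<Sum>j<n. A i j * (\<Sum>k<n. A' j k * (\<Sum>m<n. B' k m * B m l)))"
    by (rule sum_mat_mult_assoc)
  also have "\<dots> = (\<Sum>j<n. A i j * (\<Sum>m<n. (\<Sum>k<n. A' j k * B' k m) * B m l))"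
    by (simp only: sum_mat_mult_assoc)
  also have "\<dots> = (\<Sum>j<n. A i j * (\<Sum>m<n. (if j = m then 1 else 0) * B m l))"
    using assms(2) by simp
  also have "\<dots> = (\<Sum>j<n. A i j * B j l)"
    by (intro sum.cong refl arg_cong2[where f="(*)"] sum_delta_mult_left) auto
  finally show ?thesis using assms(1,3,4) by simp
qed

lemma invertible_in_mat_mult:
  assumes Q: "is_subring Q" and "invertible_in Q n A" "invertible_in Q n A'"
  shows "invertible_in Q n (\<lambda>i l. \<Sum>j<n. A i j * A' j l)"
proof -
  obtain B where B: "\<forall>i<n. \<forall>j<n. B i j \<in> Q"
    "\<forall>i<n. \<forall>j<n. (\<Sum>k<n. A i k * B k j) = (if i = j then 1 else 0)"
    "\<forall>i<n. \<forall>j<n. (\<Sum>k<n. B i k * A k j) = (if i = j then 1 else 0)"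
    and A: "\<forall>i<n. \<forall>j<n. A i j \<in> Q" using assms(2) unfolding invertible_in_def by auto
  obtain B' where B': "\<forall>i<n. \<forall>j<n. B' i j \<in> Q"
    "\<forall>i<n. \<forall>j<n. (\<Sum>k<n. A' i k * B' k j) = (if i = j then 1 else 0)"
    "\<forall>i<n. \<forall>j<n. (\<Sum>k<n. B' i k * A' k j) = (if i = j then 1 else 0)"
    and A': "\<forall>i<n. \<forall>j<n. A' i j \<in> Q" using assms(3) unfolding invertible_in_def by auto
  show ?thesis unfolding invertible_in_def
    using A A' B B' mat_mult_inverse[OF B(2) B'(2)] mat_mult_inverse[OF B'(3) B(3)]
    by (intro conjI exI[of _ "\<lambda>i l. \<Sum>j<n. B' i j * B j l"])
       (auto intro!: is_subring_sum[OF Q] is_subring_mult[OF Q])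
qed

lemma GL_equiv_trans:
  assumes Q: "is_subring Q" and "GL_equiv Q n q q'" "GL_equiv Q n q' q''"
  shows "GL_equiv Q n q q''"
proof -
  obtain A where A: "invertible_in Q n A" "\<forall>j<n. q' j = (\<Sum>i<n. q i * A i j)"
    using assms(2) GL_equiv_def by blast
  obtain A' where A': "invertible_in Q n A'" "\<forall>j<n. q'' j = (\<Sum>i<n. q' i * A' i j)"
    using assms(3) GL_equiv_def by blast
  have "q'' l = (\<Sum>i<n. q i * (\<Sum>j<n. A i j * A' j l))" if "l < n" for l
  proof -
    have "q'' l = (\<Sum>j<n. (\<Sum>i<n. q i * A i j) * A' j l)" using A A' that by simp
    also have "\<dots> = (\<Sum>i<n. q i * (\<Sum>j<n. A i j * A' j l))"
      by (rule sum_mat_mult_assoc[where A="\<lambda>_ i. q i" and i=0])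
    finally show ?thesis .
  qed
  then show ?thesis unfolding GL_equiv_def using invertible_in_mat_mult[OF Q A(1) A'(1)] by blast
qed

lemma sum_lessThan_add:
  "(\<Sum>k<n + (m::nat). f k) = (\<Sum>k<n. f k) + (\<Sum>k<m. f (n + k)::'a::comm_monoid_add)"
  by (induction m) (auto simp: add.assoc)

lemma GL_equiv_append:
  assumes Q: "is_subring Q" and "GL_equiv Q n q q'" "GL_equiv Q m p p'"
  shows "GL_equiv Q (n + m) (\<lambda>i. if i < n then q i else p (i - n))
                            (\<lambda>i. if i < n then q' i else p' (i - n))"
proof -
  obtain A B where A: "\<forall>i<n. \<forall>j<n. A i j \<in> Q" "\<forall>i<n. \<forall>j<n. B i j \<in> Q"
    "\<forall>i<n. \<forall>j<n. (\<Sum>k<n. A i k * B k j) = (if i = j then 1 else 0)"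
    "\<forall>i<n. \<forall>j<n. (\<Sum>k<n. B i k * A k j) = (if i = j then 1 else 0)"
    "\<forall>j<n. q' j = (\<Sum>i<n. q i * A i j)"
    using assms(2) unfolding GL_equiv_def invertible_in_def by blast
  obtain A' B' where A': "\<forall>i<m. \<forall>j<m. A' i j \<in> Q" "\<forall>i<m. \<forall>j<m. B' i j \<in> Q"
    "\<forall>i<m. \<forall>j<m. (\<Sum>k<m. A' i k * B' k j) = (if i = j then 1 else 0)"
    "\<forall>i<m. \<forall>j<m. (\<Sum>k<m. B' i k * A' k j) = (if i = j then 1 else 0)"
    "\<forall>j<m. p' j = (\<Sum>i<m. p i * A' i j)"
    using assms(3) unfolding GL_equiv_def invertible_in_def by blast
  define diag where "diag = (\<lambda>(X::nat\<Rightarrow>nat\<Rightarrow>'a) Y i j. if i < n \<and> j < n then X i j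
      else if n \<le> i \<and> n \<le> j then Y (i - n) (j - n) else 0)"
  have diag_mult: "(\<Sum>k<n+m. diag X Y i k * diag Z V k j) =
      (if i < n \<and> j < n then (\<Sum>k<n. X i k * Z k j)
       else if n \<le> i \<and> n \<le> j then (\<Sum>k<m. Y (i-n) k * V k (j-n)) else 0)" for X Y Z V i j
    unfolding sum_lessThan_add by (auto simp: diag_def)
  have diag_mem: "\<forall>i<n+m. \<forall>j<n+m. diag X Y i j \<in> Q"
    if "\<forall>i<n. \<forall>j<n. X i j \<in> Q" "\<forall>i<m. \<forall>j<m. Y i j \<in> Q" for X Y
    using that is_subring_0[OF Q] by (auto simp: diag_def)
  have "invertible_in Q (n+m) (diag A A')" unfolding invertible_in_def
    using A A' by (intro conjI diag_mem exI[of _ "diag B B'"]) (auto simp: diag_mult)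
  moreover have "(if j < n then q' j else p' (j - n)) =
        (\<Sum>i<n+m. (if i < n then q i else p (i - n)) * diag A A' i j)" if "j < n + m" for j
    using that A(5) A'(5) unfolding sum_lessThan_add by (auto simp: diag_def)
  ultimately show ?thesis unfolding GL_equiv_def by blast
qed

lemma GL_equiv_reverse:
  assumes Q: "is_subring Q"
    and s: "\<And>j. j < n \<Longrightarrow> s j \<in> Q" "\<And>j. j < n \<Longrightarrow> s j * s j = 1"
  shows "GL_equiv Q n q (\<lambda>j. s j * q (n - 1 - j))"
proof -
  define M where "M = (\<lambda>i j. if i + j = n - 1 then s j else 0)"
  define N where "N = (\<lambda>i j. if i + j = n - 1 then s i else 0)"
  have MN: "(\<Sum>k<n. M i k * N k j) = (if i = j then 1 else 0)" if "i < n" "j < n" for i j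
  proof -
    have "(\<Sum>k<n. M i k * N k j) = (\<Sum>k<n. if k = n - 1 - i then (if i = j then 1 else 0) else 0)"
      using that s by (intro sum.cong refl) (auto simp: M_def N_def)
    then show ?thesis using that by simp
  qed
  have NM: "(\<Sum>k<n. N i k * M k j) = (if i = j then 1 else 0)" if "i < n" "j < n" for i j
  proof -
    have "(\<Sum>k<n. N i k * M k j) = (\<Sum>k<n. if k = n - 1 - i then (if i = j then 1 else 0) else 0)"
      using that s by (intro sum.cong refl) (auto simp: M_def N_def)
    then show ?thesis using that by simp
  qed
  have "invertible_in Q n M" unfolding invertible_in_def
    using MN NM s is_subring_0[OF Q] by (intro conjI exI[of _ N]) (auto simp: M_def N_def)
  moreover have "s j * q (n - 1 - j) = (\<Sum>i<n. q i * M i j)" if "j < n" for j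
  proof -
    have "(\<Sum>i<n. q i * M i j) = (\<Sum>i<n. if i = n - 1 - j then q i * s j else 0)"
      using that by (intro sum.cong refl) (auto simp: M_def)
    then show ?thesis using that by (simp add: mult.commute)
  qed
  ultimately show ?thesis unfolding GL_equiv_def by blast
qed

text \<open>Reading the first m entries of a tuple as coefficients of a power series E(t), right
  multiplication by this matrix gives the coefficients of E(t) / (1 + w t); its inverse is the
  multiplication by 1 + w t.\<close>

definition div_linear_mat :: "'a::comm_ring_1 \<Rightarrow> nat \<Rightarrow> nat \<Rightarrow> nat \<Rightarrow> 'a" where
  "div_linear_mat w m i j =
     (if j < m then (if i \<le> j then (- w) ^ (j - i) else 0) else (if i = j then 1 else 0))"

lemma invertible_in_div_linear_mat:
  assumes Q: "is_subring Q" and w: "w \<in> Q" and mn: "m \<le> n"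
  shows "invertible_in Q n (div_linear_mat w m)"
proof -
  let ?A = "div_linear_mat w m"
  define B where "B = (\<lambda>i j. (if i = j then 1 else 0) + (if Suc i = j \<and> j < m then w else 0))"
  have AB: "(\<Sum>k<n. ?A i k * B k l) = ?A i l + (if 0 < l \<and> l < m then ?A i (l - 1) * w else 0)"
    if "l < n" for i l
  proof -
    have "(\<Sum>k<n. ?A i k * B k l) = (\<Sum>k<n. (if k = l then ?A i k else 0) +
              (if k = l - 1 \<and> 0 < l \<and> l < m then ?A i k * w else 0))"
      unfolding B_def by (intro sum.cong refl) (auto simp: algebra_simps)
    also have "\<dots> = ?A i l + (if 0 < l \<and> l < m then ?A i (l - 1) * w else 0)"
      using that by (simp add: sum.distrib) linarith
    finally show ?thesis .
  qed
  have BA: "(\<Sum>k<n. B i k * ?A k l) = ?A i l + (if Suc i < m then w * ?A (Suc i) l else 0)"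
    if "i < n" for i l
  proof -
    have "(\<Sum>k<n. B i k * ?A k l) = (\<Sum>k<n. (if k = i then ?A k l else 0) +
              (if k = Suc i \<and> Suc i < m then w * ?A k l else 0))"
      unfolding B_def by (intro sum.cong refl) (auto simp: algebra_simps)
    also have "\<dots> = ?A i l + (if Suc i < m then w * ?A (Suc i) l else 0)"
      using that mn by (simp add: sum.distrib)
    finally show ?thesis .
  qed
  have cancel: "(- w) ^ (l - i) + (- w) ^ (l - 1 - i) * w = 0" if "i < l" for i l
  proof -
    have "l - i = Suc (l - 1 - i)" using that by simp
    then show ?thesis by (simp add: algebra_simps)
  qed
  have cancel': "(- w) ^ (l - i) + w * (- w) ^ (l - Suc i) = 0" if "i < l" for i l
    using cancel[OF that] by (simp add: algebra_simps)
  show ?thesis unfolding invertible_in_def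
    using AB BA cancel cancel' is_subring_uminus[OF Q w]
    by (intro conjI exI[of _ B])
       (auto simp: div_linear_mat_def B_def intro!: is_subring_power[OF Q] is_subring_0[OF Q]
          is_subring_1[OF Q] is_subring_add[OF Q] w)
qed

lemma GL_equiv_div_linear_factor:
  assumes Q: "is_subring Q" and w: "w \<in> Q" and mn: "m \<le> n"
  shows "GL_equiv Q n E (\<lambda>p. if p < m then (\<Sum>a\<le>p. (- w) ^ (p - a) * E a) else E p)"
proof -
  have "(if p < m then (\<Sum>a\<le>p. (- w) ^ (p - a) * E a) else E p) =
      (\<Sum>i<n. E i * div_linear_mat w m i p)" if "p < n" for p
  proof (cases "p < m")
    case True
    have "(\<Sum>i<n. E i * div_linear_mat w m i p) = (\<Sum>i\<in>{..p}. E i * (- w) ^ (p - i))"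
      using True that by (intro sum.mono_neutral_cong_right) (auto simp: div_linear_mat_def)
    then show ?thesis using True by (simp add: mult.commute)
  next
    case False
    have "(\<Sum>i<n. E i * div_linear_mat w m i p) = (\<Sum>i<n. if i = p then E i else 0)"
      using False by (intro sum.cong refl) (auto simp: div_linear_mat_def)
    then show ?thesis using False that by simp
  qed
  then show ?thesis
    unfolding GL_equiv_def using invertible_in_div_linear_mat[OF Q w mn] by blast
qed


section \<open>Elementary symmetric polynomials and division by linear factors\<close>

definition elem_sym :: "(nat \<Rightarrow> 'a::comm_ring_1) \<Rightarrow> nat \<Rightarrow> nat \<Rightarrow> nat \<Rightarrow> 'a" where
  "elem_sym z lo hi i = (\<Sum>S\<in>{S. S \<subseteq> {lo..<hi} \<and> card S = i}. \<Prod>j\<in>S. z j)"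

lemma finite_subsets_atLeastLessThan: "finite {S. S \<subseteq> {lo..<hi::nat} \<and> P S}"
  by (rule finite_subset[of _ "Pow {lo..<hi}"]) auto

lemma elem_sym_0 [simp]: "elem_sym z lo hi 0 = 1"
proof -
  have "S = {}" if "S \<subseteq> {lo..<hi}" "card S = 0" for S
    using that finite_subset[OF that(1)] by auto
  then have "{S. S \<subseteq> {lo..<hi} \<and> card S = 0} = {{}}" by auto
  then show ?thesis unfolding elem_sym_def by simp
qed

lemma elem_sym_eq_0: assumes "hi - lo < i" shows "elem_sym z lo hi i = 0"
proof -
  have "card S \<le> hi - lo" if "S \<subseteq> {lo..<hi}" for S
    using card_mono[of "{lo..<hi}" S] that by auto
  then have "\<not> (S \<subseteq> {lo..<hi} \<and> card S = i)" for S using assms by (metis not_le)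
  then have "{S. S \<subseteq> {lo..<hi} \<and> card S = i} = {}" by blast
  then show ?thesis unfolding elem_sym_def by (metis sum.empty)
qed

lemma elem_sym_all: "elem_sym z lo hi (hi - lo) = (\<Prod>j\<in>{lo..<hi}. z j)"
proof -
  have "S = {lo..<hi}" if "S \<subseteq> {lo..<hi}" "card S = hi - lo" for S
    using that by (intro card_subset_eq) auto
  then have "{S. S \<subseteq> {lo..<hi} \<and> card S = hi - lo} = {{lo..<hi}}" by auto
  then show ?thesis by (simp add: elem_sym_def)
qed

lemma subsets_card_Suc_split:
  assumes "lo < hi"
  shows "{S. S \<subseteq> {lo..<hi} \<and> card S = Suc i} =
         {S. S \<subseteq> {Suc lo..<hi} \<and> card S = Suc i} \<union> insert lo ` {S. S \<subseteq> {Suc lo..<hi} \<and> card S = i}"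
    (is "?L = ?A \<union> insert lo ` ?B")
proof (intro equalityI subsetI)
  fix S assume "S \<in> ?L"
  then have S: "S \<subseteq> {lo..<hi}" "card S = Suc i" "finite S" using finite_subset by auto
  show "S \<in> ?A \<union> insert lo ` ?B"
  proof (cases "lo \<in> S")
    case True
    then have "S - {lo} \<in> ?B" "S = insert lo (S - {lo})" using S by auto
    then show ?thesis by blast
  next
    case False
    then have "S \<subseteq> {Suc lo..<hi}" using S(1) by (auto simp: Suc_le_eq order.order_iff_strict)
    then show ?thesis using S(2) by blast
  qed
next
  fix S assume "S \<in> ?A \<union> insert lo ` ?B"
  then show "S \<in> ?L"
  proof
    assume "S \<in> insert lo ` ?B"
    then obtain T where T: "T \<subseteq> {Suc lo..<hi}" "card T = i" "S = insert lo T" by auto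
    then have "finite T" "lo \<notin> T" using finite_subset by auto
    then show ?thesis using T assms by auto
  qed auto
qed

lemma elem_sym_Suc:
  assumes "lo < hi"
  shows "elem_sym z lo hi (Suc i) = elem_sym z (Suc lo) hi (Suc i) + z lo * elem_sym z (Suc lo) hi i"
proof -
  let ?A = "{S. S \<subseteq> {Suc lo..<hi} \<and> card S = Suc i}"
  let ?B = "{S. S \<subseteq> {Suc lo..<hi} \<and> card S = i}"
  have inj: "inj_on (insert lo) ?B"
    by (rule inj_onI) (metis (no_types, lifting) Diff_insert_absorb atLeastLessThan_iff
        mem_Collect_eq not_less_eq_eq order_refl subsetD)
  have "(\<Sum>S\<in>insert lo ` ?B. \<Prod>j\<in>S. z j) = (\<Sum>S\<in>?B. \<Prod>j\<in>insert lo S. z j)"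
    by (rule sum.reindex[OF inj, unfolded comp_def])
  also have "\<dots> = (\<Sum>S\<in>?B. z lo * (\<Prod>j\<in>S. z j))"
  proof (rule sum.cong[OF refl])
    fix S assume "S \<in> ?B"
    then have "finite S" "lo \<notin> S" using finite_subset by auto
    then show "(\<Prod>j\<in>insert lo S. z j) = z lo * (\<Prod>j\<in>S. z j)" by simp
  qed
  finally have "(\<Sum>S\<in>insert lo ` ?B. \<Prod>j\<in>S. z j) = z lo * elem_sym z (Suc lo) hi i"
    by (simp add: elem_sym_def sum_distrib_left)
  moreover have "?A \<inter> insert lo ` ?B = {}" by auto
  ultimately show ?thesis unfolding elem_sym_def subsets_card_Suc_split[OF assms]
    by (subst sum.union_disjoint) (auto simp: finite_subsets_atLeastLessThan)
qed

text \<open>In generating series: dividing \<Prod>_(lo\<le>j<hi) (1 + z_j t) by 1 + z_lo t.\<close>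

lemma elem_sym_drop_first:
  assumes "lo < hi"
  shows "(\<Sum>a\<le>j. (- z lo) ^ (j - a) * elem_sym z lo hi a) = elem_sym z (Suc lo) hi j"
proof (induction j)
  case (Suc j)
  have "(\<Sum>a\<le>Suc j. (- z lo) ^ (Suc j - a) * elem_sym z lo hi a)
      = (- z lo) * (\<Sum>a\<le>j. (- z lo) ^ (j - a) * elem_sym z lo hi a) + elem_sym z lo hi (Suc j)"
    by (simp add: sum_distrib_left Suc_diff_le mult.assoc)
  also have "\<dots> = elem_sym z (Suc lo) hi (Suc j)"
    using Suc elem_sym_Suc[OF assms, of z j] by (simp add: algebra_simps)
  finally show ?case .
qed simp

text \<open>quot_coeff z lo c k is the coefficient sequence of c(t) / \<Prod>_(j<k) (1 + z_(lo+j) t).\<close>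

fun quot_coeff :: "(nat \<Rightarrow> 'a::comm_ring_1) \<Rightarrow> nat \<Rightarrow> (nat \<Rightarrow> 'a) \<Rightarrow> nat \<Rightarrow> nat \<Rightarrow> 'a" where
  "quot_coeff z lo c 0 j = c j"
| "quot_coeff z lo c (Suc k) j = (\<Sum>a\<le>j. (- z (lo + k)) ^ (j - a) * quot_coeff z lo c k a)"

lemma quot_coeff_0: "c 0 = 1 \<Longrightarrow> quot_coeff z lo c k 0 = 1"
  by (induction k) auto

text \<open>The tuple (\<sigma>_(p+1)(z) - c_(p+1))_(p<M) after k division steps; the entry p is only
  divided as long as it has an index below M - k, i.e. min k (M - p) times.\<close>

definition partial_reduction ::
    "(nat \<Rightarrow> 'a::comm_ring_1) \<Rightarrow> nat \<Rightarrow> nat \<Rightarrow> (nat \<Rightarrow> 'a) \<Rightarrow> nat \<Rightarrow> nat \<Rightarrow> nat \<Rightarrow> 'a" where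
  "partial_reduction z lo hi c M k p =
     (let k' = min k (M - p) in elem_sym z (lo + k') hi (Suc p) - quot_coeff z lo c k' (Suc p))"

lemma partial_reduction_step:
  assumes Q: "is_subring Q" and zQ: "z (lo + k) \<in> Q" and c0: "c 0 = 1"
    and k: "k < M" "lo + k < hi"
  shows "GL_equiv Q M (partial_reduction z lo hi c M k) (partial_reduction z lo hi c M (Suc k))"
proof -
  let ?w = "z (lo + k)" and ?T = "partial_reduction z lo hi c M k"
  have e: "GL_equiv Q M ?T
      (\<lambda>p. if p < M - k then (\<Sum>a\<le>p. (- ?w) ^ (p - a) * ?T a) else ?T p)"
    by (rule GL_equiv_div_linear_factor[OF Q zQ]) simp
  show ?thesis
  proof (rule GL_equiv_cong[OF e refl])
    fix p assume "p < M"
    show "(if p < M - k then (\<Sum>a\<le>p. (- ?w) ^ (p - a) * ?T a) else ?T p)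
          = partial_reduction z lo hi c M (Suc k) p"
    proof (cases "p < M - k")
      case True
      define f where "f b = (- ?w) ^ (Suc p - b) * (elem_sym z (lo + k) hi b - quot_coeff z lo c k b)"
        for b
      have "(\<Sum>a\<le>p. (- ?w) ^ (p - a) * ?T a) = (\<Sum>a\<le>p. f (Suc a))"
        using True by (intro sum.cong refl) (auto simp: partial_reduction_def f_def Let_def min_def)
      also have "\<dots> = (\<Sum>b\<le>Suc p. f b)"
        by (subst sum.atMost_Suc_shift) (simp add: f_def quot_coeff_0[of c, OF c0])
      also have "\<dots> = elem_sym z (lo + Suc k) hi (Suc p) - quot_coeff z lo c (Suc k) (Suc p)"
        unfolding f_def right_diff_distrib sum_subtractf
        using elem_sym_drop_first[of "lo + k" hi z "Suc p"] k by simp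
      also have "\<dots> = partial_reduction z lo hi c M (Suc k) p"
      proof -
        have "min (Suc k) (M - p) = Suc k" using True by simp
        then show ?thesis by (simp add: partial_reduction_def Let_def)
      qed
      finally show ?thesis using True by simp
    next
      case False
      then have "min (Suc k) (M - p) = M - p" "min k (M - p) = M - p" by auto
      then show ?thesis using False by (simp add: partial_reduction_def Let_def)
    qed
  qed
qed

lemma GL_equiv_partial_reduction:
  assumes Q: "is_subring Q" and zQ: "\<And>j. lo \<le> j \<Longrightarrow> j < hi \<Longrightarrow> z j \<in> Q" and c0: "c 0 = 1"
    and M: "lo + M \<le> hi" and k: "k \<le> M"
  shows "GL_equiv Q M (partial_reduction z lo hi c M 0) (partial_reduction z lo hi c M k)"
  using k
proof (induction k)
  case 0 show ?case by (rule GL_equiv_refl[OF Q])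
next
  case (Suc k)
  then have k: "k < M" "lo + k < hi" using M by auto
  then have "z (lo + k) \<in> Q" by (intro zQ) auto
  then have "GL_equiv Q M (partial_reduction z lo hi c M k) (partial_reduction z lo hi c M (Suc k))"
    using partial_reduction_step[of Q z lo k c M hi, OF Q _ c0 k] by simp
  then show ?case using Suc GL_equiv_trans[OF Q] by auto
qed

lemma GL_equiv_reduced:
  assumes Q: "is_subring Q" and zQ: "\<And>j. 1 \<le> j \<Longrightarrow> j < hi \<Longrightarrow> z j \<in> Q" and c0: "c 0 = 1"
    and r: "1 + r \<le> hi" and s: "\<And>p. p < r \<Longrightarrow> s p \<in> Q" "\<And>p. p < r \<Longrightarrow> s p * s p = 1"
  shows "GL_equiv Q r (\<lambda>p. elem_sym z 1 hi (Suc p) - c (Suc p))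
     (\<lambda>p. s p * (elem_sym z (p + 2) hi (r - p) - quot_coeff z 1 c (Suc p) (r - p)))"
proof -
  let ?T = "partial_reduction z 1 hi c r"
  have "GL_equiv Q r (?T 0) (?T r)"
    by (rule GL_equiv_partial_reduction[of Q 1 hi z c r r, OF Q zQ c0 r]) auto
  moreover have "GL_equiv Q r (?T r) (\<lambda>j. s j * ?T r (r - 1 - j))"
    by (rule GL_equiv_reverse[OF Q s])
  ultimately have e: "GL_equiv Q r (?T 0) (\<lambda>j. s j * ?T r (r - 1 - j))"
    by (rule GL_equiv_trans[OF Q])
  show ?thesis
  proof (rule GL_equiv_cong[OF e])
    fix p assume "p < r"
    then have "min r (r - (r - 1 - p)) = Suc p" "Suc (r - 1 - p) = r - p" by auto
    then show "s p * ?T r (r - 1 - p) =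
        s p * (elem_sym z (p + 2) hi (r - p) - quot_coeff z 1 c (Suc p) (r - p))"
      by (simp add: partial_reduction_def Let_def)
  qed (simp add: partial_reduction_def)
qed


section \<open>Laurent monomials and lowest terms\<close>

abbreviation monom :: "weight \<Rightarrow> (weight \<Rightarrow>\<^sub>0 'r::comm_ring_1)" where
  "monom v \<equiv> Poly_Mapping.single v 1"

definition supported_on :: "(nat \<times> nat) set \<Rightarrow> weight set" where
  "supported_on D = {v. \<forall>x. v x \<noteq> 0 \<longrightarrow> x \<in> D}"

definition coord :: "nat \<times> nat \<Rightarrow> weight" where
  "coord x = (\<lambda>y. if y = x then 1 else 0)"

lemma sum_apply: "(sum f A) x = (\<Sum>a\<in>A. f a x)" for f :: "'b \<Rightarrow> 'c \<Rightarrow> 'd::comm_monoid_add"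
  by (induction A rule: infinite_finite_induct) auto

lemma supported_on_iff: "u \<in> supported_on D \<longleftrightarrow> (\<forall>x. x \<notin> D \<longrightarrow> u x = 0)"
  unfolding supported_on_def by blast

lemma supported_on_0: "0 \<in> supported_on D"
  by (simp add: supported_on_def)

lemma supported_on_add: "u \<in> supported_on D \<Longrightarrow> v \<in> supported_on D \<Longrightarrow> u + v \<in> supported_on D"
  by (auto simp: supported_on_iff)

lemma supported_on_uminus: "u \<in> supported_on D \<Longrightarrow> - u \<in> supported_on D"
  by (auto simp: supported_on_iff)

lemma supported_on_scale: "v \<in> supported_on D \<Longrightarrow> (\<lambda>y. k * v y) \<in> supported_on D"
  by (auto simp: supported_on_iff)

lemma supported_on_mono: "D \<subseteq> D' \<Longrightarrow> supported_on D \<subseteq> supported_on D'"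
  by (auto simp: supported_on_def)

lemma coord_in_supported_on: "x \<in> D \<Longrightarrow> coord x \<in> supported_on D"
  by (auto simp: supported_on_def coord_def)

lemma is_subring_group_ring:
  "is_subring (group_ring (supported_on D) :: (weight \<Rightarrow>\<^sub>0 'r::comm_ring_1) set)"
proof -
  let ?G = "group_ring (supported_on D) :: (weight \<Rightarrow>\<^sub>0 'r) set"
  have "a + b \<in> ?G" if "a \<in> ?G" "b \<in> ?G" for a b
    using that keys_add[of a b] by (auto simp: group_ring_def)
  moreover have "a * b \<in> ?G" if "a \<in> ?G" "b \<in> ?G" for a b
    using that keys_mult[of a b] by (auto simp: group_ring_def intro!: supported_on_add)
  ultimately show ?thesis unfolding is_subring_def
    by (auto simp: group_ring_def supported_on_0)
qed

lemma group_ring_mono: "A \<subseteq> B \<Longrightarrow> group_ring A \<subseteq> group_ring B"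
  by (auto simp: group_ring_def)

lemma monom_in_group_ring: "v \<in> S \<Longrightarrow> (monom v :: weight \<Rightarrow>\<^sub>0 'r::comm_ring_1) \<in> group_ring S"
  by (auto simp: group_ring_def)

lemma monom_add: "(monom (u + v) :: weight \<Rightarrow>\<^sub>0 'r::comm_ring_1) = monom u * monom v"
  by (simp add: mult_single)

lemma monom_sum:
  "finite A \<Longrightarrow> (monom (\<Sum>a\<in>A. f a) :: weight \<Rightarrow>\<^sub>0 'r::comm_ring_1) = (\<Prod>a\<in>A. monom (f a))"
proof (induction A rule: finite_induct)
  case empty then show ?case by (simp only: sum.empty prod.empty single_one)
next
  case (insert x F)
  then show ?case by (simp only: sum.insert[OF insert(1,2)] prod.insert[OF insert(1,2)] monom_add)
qed

definition exps_ge :: "nat \<times> nat \<Rightarrow> int \<Rightarrow> (weight \<Rightarrow>\<^sub>0 'r::comm_ring_1) \<Rightarrow> bool" where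
  "exps_ge pt a f \<longleftrightarrow> (\<forall>x\<in>Poly_Mapping.keys f. a \<le> x pt)"

lemma exps_ge_0: "exps_ge pt a 0"
  unfolding exps_ge_def by simp

lemma exps_ge_add: "exps_ge pt a f \<Longrightarrow> exps_ge pt a g \<Longrightarrow> exps_ge pt a (f + g)"
  unfolding exps_ge_def using keys_add[of f g] by auto

lemma exps_ge_uminus: "exps_ge pt a f \<Longrightarrow> exps_ge pt a (- f)"
  unfolding exps_ge_def by simp

lemma exps_ge_sum: "(\<And>i. i \<in> I \<Longrightarrow> exps_ge pt a (f i)) \<Longrightarrow> exps_ge pt a (sum f I)"
  by (induction I rule: infinite_finite_induct) (auto intro: exps_ge_0 exps_ge_add)

lemma exps_ge_mono: "a' \<le> a \<Longrightarrow> exps_ge pt a f \<Longrightarrow> exps_ge pt a' f"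
  unfolding exps_ge_def by force

lemma exps_ge_mult: "exps_ge pt a f \<Longrightarrow> exps_ge pt b g \<Longrightarrow> exps_ge pt (a + b) (f * g)"
  unfolding exps_ge_def using keys_mult[of f g] by (fastforce intro: add_mono)

lemma exps_ge_monom: "exps_ge pt (v pt) (monom v)"
  unfolding exps_ge_def by simp

lemma exps_ge_power: "exps_ge pt a f \<Longrightarrow> exps_ge pt (int k * a) (f ^ k)"
proof (induction k)
  case 0 then show ?case unfolding exps_ge_def by simp
next
  case (Suc k)
  then have "exps_ge pt (a + int k * a) (f * f ^ k)" by (intro exps_ge_mult)
  then show ?case by (simp add: algebra_simps)
qed

lemma exps_ge_group_ring:
  assumes "f \<in> group_ring (supported_on D)" "pt \<notin> D"
  shows "exps_ge pt 0 f"
proof -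
  have "0 \<le> x pt" if "x \<in> Poly_Mapping.keys f" for x
  proof -
    have "x \<in> supported_on D" using assms(1) that unfolding group_ring_def by blast
    then have "x pt = 0" using assms(2) unfolding supported_on_iff by blast
    then show ?thesis by simp
  qed
  then show ?thesis unfolding exps_ge_def by blast
qed

lemma exps_ge_neg_one_power: "exps_ge pt 0 (((- 1) ^ m) :: weight \<Rightarrow>\<^sub>0 'r::comm_ring_1)"
proof -
  have Q: "is_subring (group_ring (supported_on {}) :: (weight \<Rightarrow>\<^sub>0 'r) set)"
    by (rule is_subring_group_ring)
  have "((- 1) ^ m :: weight \<Rightarrow>\<^sub>0 'r) \<in> group_ring (supported_on {})"
    by (intro is_subring_power[OF Q] is_subring_uminus[OF Q] is_subring_1[OF Q])
  then show ?thesis by (rule exps_ge_group_ring) simp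
qed

lemma power_lowest_term:
  assumes R0: "exps_ge pt (u pt + 1) R0"
  shows "\<exists>R. ((monom u + R0) ^ m :: weight \<Rightarrow>\<^sub>0 'r::comm_ring_1) = monom (zsmult (int m) u) + R
           \<and> exps_ge pt (int m * u pt + 1) R"
proof (induction m)
  case 0
  have "zsmult (int 0) u = 0" by (simp add: zsmult_def fun_eq_iff)
  then have "((monom u + R0) ^ 0 :: weight \<Rightarrow>\<^sub>0 'r) = monom (zsmult (int 0) u) + 0"
    by (simp only: power_0 single_one add_0_right)
  then show ?case using exps_ge_0 by blast
next
  case (Suc m)
  then obtain R where R: "((monom u + R0) ^ m :: weight \<Rightarrow>\<^sub>0 'r) = monom (zsmult (int m) u) + R"
    "exps_ge pt (int m * u pt + 1) R" by blast
  define R' where "R' = monom u * R + R0 * monom (zsmult (int m) u) + R0 * R"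
  have "u + zsmult (int m) u = zsmult (int (Suc m)) u"
    by (simp add: zsmult_def fun_eq_iff algebra_simps)
  moreover have "(monom u + R0) ^ Suc m = monom (u + zsmult (int m) u) + R'"
    unfolding R'_def power_Suc R(1) monom_add by (simp add: algebra_simps)
  ultimately have "(monom u + R0) ^ Suc m = monom (zsmult (int (Suc m)) u) + R'"
    by (simp only:)
  moreover have "exps_ge pt (int (Suc m) * u pt + 1) R'"
  proof -
    have "exps_ge pt (int (Suc m) * u pt + 1) (monom u * R)"
      by (rule exps_ge_mono[OF _ exps_ge_mult[OF exps_ge_monom R(2)]]) (simp add: algebra_simps)
    moreover have "exps_ge pt (int (Suc m) * u pt + 1) (R0 * monom (zsmult (int m) u))"
      by (rule exps_ge_mono[OF _ exps_ge_mult[OF R0 exps_ge_monom]])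
         (simp add: zsmult_def algebra_simps)
    moreover have "exps_ge pt (int (Suc m) * u pt + 1) (R0 * R)"
      by (rule exps_ge_mono[OF _ exps_ge_mult[OF R0 R(2)]]) (simp add: algebra_simps)
    ultimately show ?thesis unfolding R'_def by (intro exps_ge_add)
  qed
  ultimately show ?case by blast
qed

text \<open>The paper's divisor condition for the basis vector e_pt, the sublattice spanned by e_pt and
  the basis vectors before it being the weights supported on D.\<close>

definition flat_entry :: "(nat \<times> nat) set \<Rightarrow> nat \<times> nat \<Rightarrow> (weight \<Rightarrow>\<^sub>0 'r::comm_ring_1) \<Rightarrow> bool" where
  "flat_entry D pt F \<longleftrightarrow> F \<in> group_ring (supported_on D) \<and>
     (\<exists>\<nu>\<in>supported_on D. Poly_Mapping.lookup F \<nu> = 1 \<and>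
        (\<forall>x\<in>Poly_Mapping.keys F. \<nu> pt \<le> x pt \<and> (x pt = \<nu> pt \<longrightarrow> x = \<nu>)))"

lemma flat_entry_mono:
  assumes "D \<subseteq> D'" "flat_entry D pt F"
  shows "flat_entry D' pt F"
proof -
  have S: "supported_on D \<subseteq> supported_on D'" by (rule supported_on_mono[OF assms(1)])
  have "group_ring (supported_on D) \<subseteq> (group_ring (supported_on D') :: (weight \<Rightarrow>\<^sub>0 'a) set)"
    by (rule group_ring_mono[OF S])
  with S show ?thesis using assms(2) unfolding flat_entry_def by blast
qed

lemma flat_entry_intro:
  assumes "\<nu> \<in> supported_on D" "monom \<nu> + R \<in> group_ring (supported_on D)"
    and R: "exps_ge pt (\<nu> pt + 1) R" and "(1::'r::comm_ring_1) \<noteq> 0"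
  shows "flat_entry D pt (monom \<nu> + R :: weight \<Rightarrow>\<^sub>0 'r)"
proof -
  have "\<nu> \<notin> Poly_Mapping.keys R" using R unfolding exps_ge_def by force
  then have "Poly_Mapping.lookup (monom \<nu> + R) \<nu> = 1"
    by (simp add: lookup_add in_keys_iff)
  moreover have "\<nu> pt \<le> x pt \<and> (x pt = \<nu> pt \<longrightarrow> x = \<nu>)"
    if "x \<in> Poly_Mapping.keys (monom \<nu> + R :: weight \<Rightarrow>\<^sub>0 'r)" for x
  proof -
    have "x = \<nu> \<or> x \<in> Poly_Mapping.keys R" using that keys_add[of "monom \<nu>" R] assms(4) by auto
    then show ?thesis using R unfolding exps_ge_def by force
  qed
  ultimately show ?thesis unfolding flat_entry_def using assms(1,2) by blast
qed


section \<open>Reduction of a single component\<close>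

definition coords_upto :: "nat \<Rightarrow> nat \<Rightarrow> (nat \<times> nat) set" where
  "coords_upto c j = {(c, j') | j'. 1 \<le> j' \<and> j' \<le> j}"

lemma quot_coeff_in_group_ring:
  assumes z: "\<And>j. 1 \<le> j \<Longrightarrow> z j \<in> group_ring (supported_on (coords_upto c j))"
    and c0: "\<And>j. c0 j \<in> group_ring (supported_on {})"
  shows "quot_coeff z 1 c0 k a \<in> group_ring (supported_on (coords_upto c k))"
proof (induction k arbitrary: a)
  case 0
  then show ?case using c0[of a] group_ring_mono[OF supported_on_mono[of "{}" "coords_upto c 0"]]
    by auto
next
  case (Suc k)
  let ?G = "group_ring (supported_on (coords_upto c (Suc k))) :: (weight \<Rightarrow>\<^sub>0 'a) set"
  have G: "is_subring ?G" by (rule is_subring_group_ring)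
  have "coords_upto c k \<subseteq> coords_upto c (Suc k)" by (auto simp: coords_upto_def)
  then have "quot_coeff z 1 c0 k b \<in> ?G" for b
    using Suc.IH[of b] group_ring_mono[OF supported_on_mono] by (meson subsetD)
  moreover have "z (1 + k) \<in> ?G" using z[of "1 + k"] by simp
  ultimately show ?case
    by (simp only: quot_coeff.simps)
       (intro is_subring_sum[OF G] is_subring_mult[OF G] is_subring_power[OF G] is_subring_uminus[OF G])
qed

lemma exps_ge_quot_coeff:
  assumes "\<And>j. 1 \<le> j \<Longrightarrow> z j \<in> group_ring (supported_on (coords_upto c j))"
    and "\<And>j. c0 j \<in> group_ring (supported_on {})"
  shows "exps_ge (c, Suc k) 0 (quot_coeff z 1 c0 k a)"
  by (rule exps_ge_group_ring[OF quot_coeff_in_group_ring[OF assms]]) (auto simp: coords_upto_def)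

definition sym_var_C :: "nat \<Rightarrow> nat \<Rightarrow> (weight \<Rightarrow>\<^sub>0 'r::comm_ring_1)" where
  "sym_var_C c j = monom (coord (c, j)) + monom (- coord (c, j))"

lemma sym_var_C_in_group_ring:
  "1 \<le> j \<Longrightarrow> sym_var_C c j \<in> group_ring (supported_on (coords_upto c j))"
  unfolding sym_var_C_def
  by (intro is_subring_add[OF is_subring_group_ring] monom_in_group_ring supported_on_uminus
      coord_in_supported_on) (auto simp: coords_upto_def)

lemma quot_coeff_C_lowest_term:
  fixes c0 :: "nat \<Rightarrow> weight \<Rightarrow>\<^sub>0 'r::comm_ring_1"
  assumes c0: "c0 0 = 1" "\<And>j. c0 j \<in> group_ring (supported_on {})"
  shows "\<exists>R. quot_coeff (sym_var_C c) 1 c0 (Suc p) m =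
              (- 1) ^ m * monom (zsmult (int m) (- coord (c, Suc p))) + R
           \<and> exps_ge (c, Suc p) (1 - int m) R"
proof -
  let ?pt = "(c, Suc p)" and ?z = "sym_var_C c :: nat \<Rightarrow> weight \<Rightarrow>\<^sub>0 'r"
  let ?u = "- coord ?pt" and ?q = "quot_coeff (sym_var_C c) 1 c0 p"
  have z: "?z (1 + p) = monom ?u + monom (coord ?pt)"
    unfolding sym_var_C_def Suc_eq_plus1_left by (rule add.commute)
  have u: "?u ?pt = - 1" by (simp add: coord_def)
  have "exps_ge ?pt (?u ?pt + 1) (monom (coord ?pt) :: weight \<Rightarrow>\<^sub>0 'r)"
    unfolding u by (rule exps_ge_mono[OF _ exps_ge_monom]) (simp add: coord_def)
  then obtain R where R: "?z (1 + p) ^ m = monom (zsmult (int m) ?u) + R"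
    "exps_ge ?pt (int m * ?u ?pt + 1) R"
    unfolding z by (blast dest: power_lowest_term[where m=m])
  define B where "B = (\<Sum>a<m. (- ?z (1 + p)) ^ (m - Suc a) * ?q (Suc a))"
  have "quot_coeff (sym_var_C c) 1 c0 (Suc p) m = (- ?z (1 + p)) ^ m * ?q 0 + B"
    unfolding B_def by (simp only: quot_coeff.simps sum.atMost_shift diff_zero)
  also have "\<dots> = (- 1) ^ m * monom (zsmult (int m) ?u) + ((- 1) ^ m * R + B)"
    unfolding power_minus[of "?z (1 + p)"] R(1) quot_coeff_0[of c0, OF c0(1)]
    by (simp add: algebra_simps)
  finally have eq: "quot_coeff (sym_var_C c) 1 c0 (Suc p) m =
      (- 1) ^ m * monom (zsmult (int m) ?u) + ((- 1) ^ m * R + B)" .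
  have "exps_ge ?pt (- 1) (monom (coord ?pt) :: weight \<Rightarrow>\<^sub>0 'r)"
    by (rule exps_ge_mono[OF _ exps_ge_monom]) (simp add: coord_def)
  then have z_exps: "exps_ge ?pt (- 1) (- ?z (1 + p))"
    unfolding z using exps_ge_monom[of ?pt ?u] u by (intro exps_ge_uminus exps_ge_add) simp_all
  have "exps_ge ?pt (1 - int m) B"
    unfolding B_def
  proof (rule exps_ge_sum)
    fix a assume "a \<in> {..<m}"
    have "exps_ge ?pt (int (m - Suc a) * (- 1) + 0) ((- ?z (1 + p)) ^ (m - Suc a) * ?q (Suc a))"
      by (intro exps_ge_mult exps_ge_power z_exps exps_ge_quot_coeff sym_var_C_in_group_ring c0(2))
    then show "exps_ge ?pt (1 - int m) ((- ?z (1 + p)) ^ (m - Suc a) * ?q (Suc a))"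
      by (rule exps_ge_mono[rotated]) (use \<open>a \<in> {..<m}\<close> in simp)
  qed
  moreover have "exps_ge ?pt (0 + (1 - int m)) ((- 1) ^ m * R)"
    using exps_ge_mult[OF exps_ge_neg_one_power R(2)] u by simp
  ultimately have "exps_ge ?pt (1 - int m) ((- 1) ^ m * R + B)"
    by (intro exps_ge_add) simp_all
  then show ?thesis using eq by blast
qed

lemma flat_entry_reduced_C:
  fixes c0 :: "nat \<Rightarrow> weight \<Rightarrow>\<^sub>0 'r::comm_ring_1"
  assumes p: "p < r" and c0: "c0 0 = 1" "\<And>j. c0 j \<in> group_ring (supported_on {})"
    and one: "(1::'r) \<noteq> 0"
  shows "flat_entry (coords_upto c (Suc p)) (c, Suc p)
     (- ((- 1) ^ (r - p)) * (elem_sym (sym_var_C c) (p + 2) (r + 1) (r - p)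
                              - quot_coeff (sym_var_C c) 1 c0 (Suc p) (r - p)))"
proof -
  define m where "m = r - p"
  let ?pt = "(c, Suc p)" and ?\<nu> = "zsmult (int m) (- coord (c, Suc p))"
  let ?G = "group_ring (supported_on (coords_upto c (Suc p))) :: (weight \<Rightarrow>\<^sub>0 'r) set"
  have G: "is_subring ?G" by (rule is_subring_group_ring)
  obtain R where R: "quot_coeff (sym_var_C c) 1 c0 (Suc p) m = (- 1) ^ m * monom ?\<nu> + R"
    "exps_ge ?pt (1 - int m) R"
    using quot_coeff_C_lowest_term[of c0 c p m, OF c0] by blast
  have "elem_sym (sym_var_C c) (p + 2) (r + 1) m = (0 :: weight \<Rightarrow>\<^sub>0 'r)"
    by (rule elem_sym_eq_0) (use p in \<open>simp add: m_def\<close>)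
  then have entry: "- ((- 1) ^ m) * (elem_sym (sym_var_C c) (p + 2) (r + 1) m
                        - quot_coeff (sym_var_C c) 1 c0 (Suc p) m) = monom ?\<nu> + (- 1) ^ m * R"
    unfolding R(1) by (simp add: algebra_simps)
  have "- ((- 1) ^ m) * (0 - quot_coeff (sym_var_C c) 1 c0 (Suc p) m) \<in> ?G"
    using quot_coeff_in_group_ring[OF sym_var_C_in_group_ring c0(2)]
    by (intro is_subring_mult[OF G] is_subring_diff[OF G] is_subring_uminus[OF G]
        is_subring_power[OF G] is_subring_1[OF G] is_subring_0[OF G])
  then have "monom ?\<nu> + (- 1) ^ m * R \<in> ?G"
    using entry \<open>elem_sym _ _ _ m = 0\<close> by simp
  moreover have "?\<nu> \<in> supported_on (coords_upto c (Suc p))"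
    unfolding zsmult_def
    by (intro supported_on_scale supported_on_uminus coord_in_supported_on) (simp add: coords_upto_def)
  moreover have "exps_ge ?pt (?\<nu> ?pt + 1) ((- 1) ^ m * R)"
    using exps_ge_mult[OF exps_ge_neg_one_power R(2)] by (simp add: zsmult_def coord_def)
  ultimately show ?thesis
    unfolding m_def[symmetric] entry using flat_entry_intro one by blast
qed

text \<open>The image of e_j (1 \<le> j \<le> r + 1) in \<int>^(r+1) / \<int>(e_1 + ... + e_(r+1)), in the representative
  with vanishing coordinate r + 1 used by weight_lattice.\<close>

definition coordA :: "nat \<Rightarrow> nat \<Rightarrow> nat \<Rightarrow> weight" where
  "coordA c r j = (\<lambda>(c', k). if c' = c \<and> 1 \<le> k \<and> k \<le> r
      then (if k = j then 1 else 0) - (if j = r + 1 then 1 else 0) else 0)"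

definition sym_var_A :: "nat \<Rightarrow> nat \<Rightarrow> nat \<Rightarrow> (weight \<Rightarrow>\<^sub>0 'r::comm_ring_1)" where
  "sym_var_A c r j = monom (coordA c r j)"

lemma coordA_in_supported_on: "(\<And>k. 1 \<le> k \<Longrightarrow> k \<le> r \<Longrightarrow> (c, k) \<in> D) \<Longrightarrow> coordA c r j \<in> supported_on D"
  unfolding supported_on_iff coordA_def by auto

lemma sym_var_A_in_group_ring:
  "1 \<le> j \<Longrightarrow> sym_var_A c r j \<in> group_ring (supported_on (coords_upto c j))"
  unfolding sym_var_A_def
  by (intro monom_in_group_ring) (auto simp: supported_on_iff coordA_def coords_upto_def)

lemma coordA_eq_coord: "1 \<le> j \<Longrightarrow> j \<le> r \<Longrightarrow> coordA c r j = coord (c, j)"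
  unfolding coordA_def coord_def by (auto simp: fun_eq_iff)

lemma sum_coordA_tail:
  assumes "p < r"
  shows "(\<Sum>j\<in>{p + 2..<r + 2}. coordA c r j) =
         (\<lambda>(c', k). if c' = c \<and> 1 \<le> k \<and> k \<le> Suc p then - 1 else 0)"
proof
  fix x :: "nat \<times> nat"
  obtain c' k where x: "x = (c', k)" by (cases x)
  show "(\<Sum>j\<in>{p + 2..<r + 2}. coordA c r j) x =
        (\<lambda>(c', k). if c' = c \<and> 1 \<le> k \<and> k \<le> Suc p then - 1 else 0) x"
  proof (cases "c' = c \<and> 1 \<le> k \<and> k \<le> r")
    case True
    have "(\<Sum>j\<in>{p + 2..<r + 2}. coordA c r j (c', k)) =
        (\<Sum>j\<in>{p + 2..<r + 2}. (if k = j then 1 else 0)) - (\<Sum>j\<in>{p + 2..<r + 2}. (if j = r + 1 then 1 else 0))"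
      using True by (simp add: coordA_def sum_subtractf)
    also have "\<dots> = (if k \<in> {p + 2..<r + 2} then 1 else 0) - 1"
      using assms by simp
    finally show ?thesis using True by (auto simp: x sum_apply)
  next
    case False
    then show ?thesis using assms by (auto simp: x sum_apply coordA_def)
  qed
qed

lemma flat_entry_reduced_A:
  fixes c0 :: "nat \<Rightarrow> weight \<Rightarrow>\<^sub>0 'r::comm_ring_1"
  assumes p: "p < r" and c0: "c0 0 = 1" "\<And>j. c0 j \<in> group_ring (supported_on {})"
    and one: "(1::'r) \<noteq> 0"
  shows "flat_entry (coords_upto c (Suc p)) (c, Suc p)
     (elem_sym (sym_var_A c r) (p + 2) (r + 2) (r - p) - quot_coeff (sym_var_A c r) 1 c0 (Suc p) (r - p))"
proof -
  define m where "m = r - p"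
  let ?pt = "(c, Suc p)" and ?z = "sym_var_A c r :: nat \<Rightarrow> weight \<Rightarrow>\<^sub>0 'r"
  let ?q = "quot_coeff ?z 1 c0"
  define \<nu> where "\<nu> = (\<lambda>(c', k). if c' = c \<and> 1 \<le> k \<and> k \<le> Suc p then - 1 else 0 :: int)"
  let ?G = "group_ring (supported_on (coords_upto c (Suc p))) :: (weight \<Rightarrow>\<^sub>0 'r) set"
  have elem_sym_monom: "elem_sym ?z (p + 2) (r + 2) m = monom \<nu>"
  proof -
    have "elem_sym ?z (p + 2) (r + 2) m = (\<Prod>j\<in>{p + 2..<r + 2}. ?z j)"
      using elem_sym_all[of ?z "p + 2" "r + 2"] by (simp add: m_def)
    also have "\<dots> = monom (\<Sum>j\<in>{p + 2..<r + 2}. coordA c r j)"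
      unfolding sym_var_A_def by (rule monom_sum[symmetric]) simp
    finally show ?thesis unfolding \<nu>_def sum_coordA_tail[OF p] .
  qed
  have "?z (1 + p) = monom (coord ?pt)"
    using p by (simp add: sym_var_A_def coordA_eq_coord)
  then have z_exps: "exps_ge ?pt 0 (- ?z (1 + p))"
    by (simp only:) (intro exps_ge_uminus exps_ge_mono[OF _ exps_ge_monom], simp add: coord_def)
  have "exps_ge ?pt 0 (?q (Suc p) m)"
    unfolding quot_coeff.simps
  proof (rule exps_ge_sum)
    fix a
    have "exps_ge ?pt (int (m - a) * 0 + 0) ((- ?z (1 + p)) ^ (m - a) * ?q p a)"
      by (intro exps_ge_mult exps_ge_power z_exps exps_ge_quot_coeff sym_var_A_in_group_ring c0(2))
    then show "exps_ge ?pt 0 ((- ?z (1 + p)) ^ (m - a) * ?q p a)" by simp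
  qed
  moreover have "\<nu> \<in> supported_on (coords_upto c (Suc p))"
    unfolding supported_on_iff \<nu>_def coords_upto_def by auto
  moreover have "monom \<nu> + (- ?q (Suc p) m) \<in> ?G"
    using quot_coeff_in_group_ring[OF sym_var_A_in_group_ring c0(2)] calculation(2)
    by (intro is_subring_add[OF is_subring_group_ring] is_subring_uminus[OF is_subring_group_ring]
        monom_in_group_ring)
  ultimately have "flat_entry (coords_upto c (Suc p)) ?pt (monom \<nu> + (- ?q (Suc p) m))"
    using one by (intro flat_entry_intro exps_ge_uminus) (auto simp: \<nu>_def)
  then show ?thesis unfolding m_def[symmetric] elem_sym_monom by simp
qed

lemma reduce_type_C:
  fixes c0 :: "nat \<Rightarrow> weight \<Rightarrow>\<^sub>0 'r::comm_ring_1"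
  assumes c0: "c0 0 = 1" "\<And>j. c0 j \<in> group_ring (supported_on {})"
    and D: "\<And>j. 1 \<le> j \<Longrightarrow> j \<le> r \<Longrightarrow> (c, j) \<in> D" and one: "(1::'r) \<noteq> 0"
    and q: "\<And>p. p < r \<Longrightarrow> q p = elem_sym (sym_var_C c) 1 (r + 1) (Suc p) - c0 (Suc p)"
  shows "\<exists>F. GL_equiv (group_ring (supported_on D)) r q F \<and>
      (\<forall>p<r. flat_entry (coords_upto c (Suc p)) (c, Suc p) (F p))"
proof -
  let ?Q = "group_ring (supported_on D) :: (weight \<Rightarrow>\<^sub>0 'r) set"
  define s where "s = (\<lambda>p. - ((- 1) ^ (r - p)) :: weight \<Rightarrow>\<^sub>0 'r)"
  have Q: "is_subring ?Q" by (rule is_subring_group_ring)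
  have "sym_var_C c j \<in> ?Q" if "1 \<le> j" "j < r + 1" for j
    unfolding sym_var_C_def using that D[of j]
    by (intro is_subring_add[OF Q] monom_in_group_ring supported_on_uminus coord_in_supported_on) auto
  moreover have "s p \<in> ?Q" "s p * s p = 1" for p
    unfolding s_def
    by (auto intro!: is_subring_uminus[OF Q] is_subring_power[OF Q] is_subring_1[OF Q])
  ultimately have "GL_equiv ?Q r (\<lambda>p. elem_sym (sym_var_C c) 1 (r + 1) (Suc p) - c0 (Suc p))
     (\<lambda>p. s p * (elem_sym (sym_var_C c) (p + 2) (r + 1) (r - p) - quot_coeff (sym_var_C c) 1 c0 (Suc p) (r - p)))"
    by (intro GL_equiv_reduced[of ?Q "r + 1" "sym_var_C c" c0 r s, OF Q _ c0(1)]) auto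
  then show ?thesis
    using q flat_entry_reduced_C[where ?c0.0=c0 and c=c and r=r, OF _ c0 one] unfolding s_def
    by (intro exI conjI GL_equiv_cong[where p=q]) auto
qed

lemma reduce_type_A:
  fixes c0 :: "nat \<Rightarrow> weight \<Rightarrow>\<^sub>0 'r::comm_ring_1"
  assumes c0: "c0 0 = 1" "\<And>j. c0 j \<in> group_ring (supported_on {})"
    and D: "\<And>j. 1 \<le> j \<Longrightarrow> j \<le> r \<Longrightarrow> (c, j) \<in> D" and one: "(1::'r) \<noteq> 0"
    and q: "\<And>p. p < r \<Longrightarrow> q p = elem_sym (sym_var_A c r) 1 (r + 2) (Suc p) - c0 (Suc p)"
  shows "\<exists>F. GL_equiv (group_ring (supported_on D)) r q F \<and>
      (\<forall>p<r. flat_entry (coords_upto c (Suc p)) (c, Suc p) (F p))"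
proof -
  let ?Q = "group_ring (supported_on D) :: (weight \<Rightarrow>\<^sub>0 'r) set"
  have Q: "is_subring ?Q" by (rule is_subring_group_ring)
  have "sym_var_A c r j \<in> ?Q" for j
    unfolding sym_var_A_def using D by (intro monom_in_group_ring coordA_in_supported_on)
  then have "GL_equiv ?Q r (\<lambda>p. elem_sym (sym_var_A c r) 1 (r + 2) (Suc p) - c0 (Suc p))
     (\<lambda>p. 1 * (elem_sym (sym_var_A c r) (p + 2) (r + 2) (r - p) - quot_coeff (sym_var_A c r) 1 c0 (Suc p) (r - p)))"
    by (intro GL_equiv_reduced[of ?Q "r + 2" "sym_var_A c r" c0 r "\<lambda>_. 1", OF Q _ c0(1)]
        is_subring_1[OF Q]) auto
  then show ?thesis
    using q flat_entry_reduced_A[where ?c0.0=c0 and c=c and r=r, OF _ c0 one]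
    by (intro exI conjI GL_equiv_cong[where p=q]) auto
qed


section \<open>Orbits of fundamental weights\<close>

lemma weyl_group_iff: "w \<in> weyl_group comps \<longleftrightarrow> (\<forall>c < length comps.
      fst w c permutes {1..n_coords (comps ! c)} \<and> (\<forall>j. snd w c j \<in> {1, -1}) \<and>
      (fst (comps ! c) = TypeA \<longrightarrow> (\<forall>j. snd w c j = 1)))"
  by (cases w) (simp add: weyl_group_def)

lemma fund_weight_apply:
  "fund_weight c i (c', j) = (if c' = c \<and> 1 \<le> j \<and> j \<le> i then 1 else 0)"
  by (simp add: fund_weight_def)

lemma permutes_inv_in_iff: "\<sigma> permutes A \<Longrightarrow> inv \<sigma> k \<in> B \<longleftrightarrow> k \<in> \<sigma> ` B"
  by (metis image_iff permutes_inverses(1,2))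

lemma card_image_permutes: "\<sigma> permutes A \<Longrightarrow> card (\<sigma> ` B) = card B"
  by (simp add: card_image permutes_inj_on)

lemma exists_permutes_image:
  assumes S: "S \<subseteq> {1..N}" "card S = i" and i: "i \<le> N"
  shows "\<exists>\<sigma>. \<sigma> permutes {1..N} \<and> \<sigma> ` {1..i} = S"
proof -
  have fS: "finite S" using S(1) finite_subset by blast
  obtain f where f: "bij_betw f {1..i} S"
    using finite_same_card_bij[of "{1..i}" S] fS S(2) by auto
  have "card {i+1..N} = card ({1..N} - S)" using S i fS by (simp add: card_Diff_subset)
  then obtain g where g: "bij_betw g {i+1..N} ({1..N} - S)"
    using finite_same_card_bij[of "{i+1..N}" "{1..N} - S"] by auto
  define \<sigma> where "\<sigma> x = (if x \<in> {1..i} then f x else if x \<in> {i+1..N} then g x else x)" for x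
  have b1: "bij_betw \<sigma> {1..i} S"
    using f by (rule bij_betw_cong[THEN iffD1, rotated]) (simp add: \<sigma>_def)
  have b2: "bij_betw \<sigma> {i+1..N} ({1..N} - S)"
    using g by (rule bij_betw_cong[THEN iffD1, rotated]) (auto simp: \<sigma>_def)
  have "bij_betw \<sigma> ({1..i} \<union> {i+1..N}) (S \<union> ({1..N} - S))"
    by (rule bij_betw_combine[OF b1 b2]) auto
  moreover have "{1..i} \<union> {i+1..N} = {1..N}" "S \<union> ({1..N} - S) = {1..N}" using i S by auto
  ultimately have "bij_betw \<sigma> {1..N} {1..N}" by simp
  then have "\<sigma> permutes {1..N}" by (rule bij_imp_permutes) (use i in \<open>auto simp: \<sigma>_def\<close>)
  moreover have "\<sigma> ` {1..i} = S" using b1 by (simp add: bij_betw_def)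
  ultimately show ?thesis by blast
qed

definition orbit_point_A :: "nat \<Rightarrow> nat \<Rightarrow> nat set \<Rightarrow> weight" where
  "orbit_point_A c r S = (\<Sum>j\<in>S. coordA c r j)"

definition orbit_point_C :: "nat \<Rightarrow> nat set \<times> nat set \<Rightarrow> weight" where
  "orbit_point_C c ST = (\<Sum>j\<in>snd ST. coord (c, j)) + (\<Sum>j\<in>fst ST - snd ST. - coord (c, j))"

lemma orbit_point_A_apply:
  assumes "finite S"
  shows "orbit_point_A c r S (c', k) = (if c' = c \<and> 1 \<le> k \<and> k \<le> r
     then (if k \<in> S then 1 else 0) - (if r + 1 \<in> S then 1 else 0) else 0)"
proof (cases "c' = c \<and> 1 \<le> k \<and> k \<le> r")
  case True
  then have "orbit_point_A c r S (c', k) =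
      (\<Sum>j\<in>S. (if k = j then 1 else 0)) - (\<Sum>j\<in>S. (if j = r + 1 then 1 else 0))"
    unfolding orbit_point_A_def sum_apply by (simp add: coordA_def sum_subtractf)
  then show ?thesis using True assms by simp
next
  case False
  then show ?thesis unfolding orbit_point_A_def sum_apply by (auto simp: coordA_def)
qed

lemma orbit_point_C_apply:
  assumes S: "finite S" and T: "T \<subseteq> S"
  shows "orbit_point_C c (S, T) (c', k) = (if c' = c \<and> k \<in> S then (if k \<in> T then 1 else - 1) else 0)"
proof -
  have fT: "finite T" using S T finite_subset by blast
  have "orbit_point_C c (S, T) (c', k) =
      (\<Sum>j\<in>T. if j = k then (if c' = c then 1 else 0) else 0) +
      (\<Sum>j\<in>S - T. if j = k then (if c' = c then - 1 else 0) else 0)"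
    unfolding orbit_point_C_def plus_fun_apply sum_apply
    by (intro arg_cong2[where f="(+)"] sum.cong refl) (auto simp: coord_def)
  also have "\<dots> = (if c' = c \<and> k \<in> S then (if k \<in> T then 1 else - 1) else 0)"
    using S fT T by (auto simp: sum.delta)
  finally show ?thesis .
qed

lemma weyl_act_fund_weight_A:
  assumes c: "c < length comps" and t: "comps ! c = (TypeA, r)" and w: "w \<in> weyl_group comps"
    and i: "i \<le> r"
  shows "weyl_act comps w (fund_weight c i) = orbit_point_A c r (fst w c ` {1..i})"
proof
  fix x :: "nat \<times> nat"
  obtain c' k where x: "x = (c', k)" by (cases x)
  have p: "fst w c permutes {1..r + 1}" using w c t by (auto simp: weyl_group_iff n_coords_def)
  have key: "(1 \<le> inv (fst w c) j \<and> inv (fst w c) j \<le> i) \<longleftrightarrow> j \<in> fst w c ` {1..i}" for j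
    using permutes_inv_in_iff[OF p, of j "{1..i}"] by auto
  show "weyl_act comps w (fund_weight c i) x = orbit_point_A c r (fst w c ` {1..i}) x"
  proof (cases "c' = c \<and> 1 \<le> k \<and> k \<le> r")
    case True
    then show ?thesis unfolding x weyl_act_def using c t key[of k] key[of "r + 1"]
      by (simp add: orbit_point_A_apply fund_weight_apply)
  next
    case False
    then show ?thesis unfolding x weyl_act_def using c t
      by (cases "c' < length comps"; cases "fst (comps ! c')")
         (auto simp: orbit_point_A_apply fund_weight_apply)
  qed
qed

lemma weyl_act_fund_weight_C:
  assumes c: "c < length comps" and t: "comps ! c = (TypeC, r)" and w: "w \<in> weyl_group comps"
    and i: "i \<le> r"
  shows "weyl_act comps w (fund_weight c i) =
    orbit_point_C c (fst w c ` {1..i}, {k \<in> fst w c ` {1..i}. snd w c (inv (fst w c) k) = 1})"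
proof
  fix x :: "nat \<times> nat"
  obtain c' k where x: "x = (c', k)" by (cases x)
  let ?\<sigma> = "fst w c"
  let ?S = "?\<sigma> ` {1..i}"
  have p: "?\<sigma> permutes {1..r}" using w c t by (auto simp: weyl_group_iff n_coords_def)
  have eps: "snd w c j \<in> {1, -1}" for j using w c by (auto simp: weyl_group_iff)
  have S_sub: "?S \<subseteq> {1..r}" using permutes_image[OF p] i by auto
  have key: "(1 \<le> inv ?\<sigma> j \<and> inv ?\<sigma> j \<le> i) \<longleftrightarrow> j \<in> ?S" for j
    using permutes_inv_in_iff[OF p, of j "{1..i}"] by auto
  show "weyl_act comps w (fund_weight c i) x = orbit_point_C c (?S, {k \<in> ?S. snd w c (inv ?\<sigma> k) = 1}) x"
  proof (cases "c' = c \<and> 1 \<le> k \<and> k \<le> r")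
    case True
    have "weyl_act comps w (fund_weight c i) x = (if k \<in> ?S then snd w c (inv ?\<sigma> k) else 0)"
      unfolding x weyl_act_def using c t True key[of k] by (simp add: fund_weight_apply)
    also have "\<dots> = orbit_point_C c (?S, {k \<in> ?S. snd w c (inv ?\<sigma> k) = 1}) x"
      unfolding x using True eps[of "inv ?\<sigma> k"] by (subst orbit_point_C_apply) auto
    finally show ?thesis .
  next
    case False
    then have "k \<notin> ?S \<or> c' \<noteq> c" using S_sub by auto
    then show ?thesis unfolding x weyl_act_def using c t False
      by (cases "c' < length comps"; cases "fst (comps ! c')")
         (auto simp: orbit_point_C_apply fund_weight_apply)
  qed
qed

lemma weyl_orbit_fund_weight_A:
  assumes c: "c < length comps" and t: "comps ! c = (TypeA, r)" and i: "i \<le> r"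
  shows "weyl_orbit comps (fund_weight c i) =
         orbit_point_A c r ` {S. S \<subseteq> {1..<r+2} \<and> card S = i}"
proof (intro equalityI subsetI)
  fix x assume "x \<in> weyl_orbit comps (fund_weight c i)"
  then obtain w where w: "w \<in> weyl_group comps" "x = weyl_act comps w (fund_weight c i)"
    unfolding weyl_orbit_def by blast
  have p: "fst w c permutes {1..r + 1}" using w c t by (auto simp: weyl_group_iff n_coords_def)
  have "fst w c ` {1..i} \<subseteq> fst w c ` {1..r+1}" using i by (intro image_mono) auto
  then have "fst w c ` {1..i} \<subseteq> {1..<r+2}" using permutes_image[OF p] by auto
  moreover have "card (fst w c ` {1..i}) = i" using card_image_permutes[OF p] by simp
  ultimately show "x \<in> orbit_point_A c r ` {S. S \<subseteq> {1..<r+2} \<and> card S = i}"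
    using weyl_act_fund_weight_A[OF c t w(1) i] w(2) by blast
next
  fix x assume "x \<in> orbit_point_A c r ` {S. S \<subseteq> {1..<r+2} \<and> card S = i}"
  then obtain S where "S \<subseteq> {1..<r+2}" "card S = i" "x = orbit_point_A c r S" by auto
  then have S: "S \<subseteq> {1..r+1}" "card S = i" "x = orbit_point_A c r S" by auto
  obtain \<sigma> where \<sigma>: "\<sigma> permutes {1..r+1}" "\<sigma> ` {1..i} = S"
    using exists_permutes_image[OF S(1,2)] i by auto
  define w where "w = ((\<lambda>c'. if c' = c then \<sigma> else id), (\<lambda>(c'::nat) (j::nat). 1::int))"
  have w: "w \<in> weyl_group comps"
    unfolding weyl_group_iff w_def using \<sigma> t by (auto simp: n_coords_def)
  have "weyl_act comps w (fund_weight c i) = x"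
    using weyl_act_fund_weight_A[OF c t w i] \<sigma> S by (simp add: w_def)
  then show "x \<in> weyl_orbit comps (fund_weight c i)" unfolding weyl_orbit_def using w by blast
qed

lemma weyl_orbit_fund_weight_C:
  assumes c: "c < length comps" and t: "comps ! c = (TypeC, r)" and i: "i \<le> r"
  shows "weyl_orbit comps (fund_weight c i) =
         orbit_point_C c ` {(S, T). S \<subseteq> {1..<r+1} \<and> card S = i \<and> T \<subseteq> S}"
proof (intro equalityI subsetI)
  fix x assume "x \<in> weyl_orbit comps (fund_weight c i)"
  then obtain w where w: "w \<in> weyl_group comps" "x = weyl_act comps w (fund_weight c i)"
    unfolding weyl_orbit_def by blast
  have p: "fst w c permutes {1..r}" using w c t by (auto simp: weyl_group_iff n_coords_def)
  have "fst w c ` {1..i} \<subseteq> fst w c ` {1..r}" using i by (intro image_mono) auto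
  then have "fst w c ` {1..i} \<subseteq> {1..<r+1}" using permutes_image[OF p] by auto
  moreover have "card (fst w c ` {1..i}) = i" using card_image_permutes[OF p] by simp
  ultimately show "x \<in> orbit_point_C c ` {(S, T). S \<subseteq> {1..<r+1} \<and> card S = i \<and> T \<subseteq> S}"
    using weyl_act_fund_weight_C[OF c t w(1) i] w(2) by force
next
  fix x assume "x \<in> orbit_point_C c ` {(S, T). S \<subseteq> {1..<r+1} \<and> card S = i \<and> T \<subseteq> S}"
  then obtain S T where "S \<subseteq> {1..<r+1}" "card S = i" "T \<subseteq> S" "x = orbit_point_C c (S, T)"
    by auto
  then have S: "S \<subseteq> {1..r}" "card S = i" "T \<subseteq> S" "x = orbit_point_C c (S, T)" by auto
  obtain \<sigma> where \<sigma>: "\<sigma> permutes {1..r}" "\<sigma> ` {1..i} = S"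
    using exists_permutes_image[OF S(1,2)] i by auto
  define \<epsilon> where "\<epsilon> j = (if \<sigma> j \<in> T then 1 else - 1 :: int)" for j
  define w where "w = ((\<lambda>c'. if c' = c then \<sigma> else id),
                       (\<lambda>(c'::nat). if c' = c then \<epsilon> else (\<lambda>j::nat. 1::int)))"
  have w: "w \<in> weyl_group comps"
    unfolding weyl_group_iff w_def using \<sigma> t by (auto simp: n_coords_def \<epsilon>_def)
  have "{k \<in> S. \<epsilon> (inv \<sigma> k) = 1} = T"
    using S(3) permutes_inverses(1)[OF \<sigma>(1)] by (auto simp: \<epsilon>_def)
  then have "weyl_act comps w (fund_weight c i) = x"
    using weyl_act_fund_weight_C[OF c t w i] \<sigma> S by (simp add: w_def)
  then show "x \<in> weyl_orbit comps (fund_weight c i)" unfolding weyl_orbit_def using w by blast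
qed

text \<open>Two i-subsets of {1..r+1} with i \<le> r giving the same point of the quotient lattice
  must agree on r + 1: otherwise the one containing r + 1 would contain all of {1..r+1}.\<close>

lemma inj_on_orbit_point_A:
  assumes i: "i \<le> r"
  shows "inj_on (orbit_point_A c r) {S. S \<subseteq> {1..<r+2} \<and> card S = i}"
proof (rule inj_onI)
  let ?I = "{S. S \<subseteq> {1..<r+2} \<and> card S = i}"
  have top_agree: "r + 1 \<in> B"
    if A: "A \<in> ?I" "r + 1 \<in> A" and eq: "orbit_point_A c r A = orbit_point_A c r B" and B: "B \<in> ?I"
    for A B
  proof (rule ccontr)
    assume nB: "r + 1 \<notin> B"
    have fin: "finite A" "finite B" using A(1) B by (auto intro: finite_subset)
    have "k \<in> A" if "1 \<le> k" "k \<le> r" for k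
      using fun_cong[OF eq, of "(c, k)"] that A(2) nB
      by (auto simp: orbit_point_A_apply[OF fin(1)] orbit_point_A_apply[OF fin(2)] split: if_splits)
    then have "{1..r+1} \<subseteq> A" using A(2) by (auto simp: le_Suc_eq)
    then have "card {1..r+1} \<le> card A" using A(1) finite_subset by (intro card_mono) auto
    then show False using A(1) i by simp
  qed
  fix S S' assume S: "S \<in> ?I" and S': "S' \<in> ?I" and eq: "orbit_point_A c r S = orbit_point_A c r S'"
  have top: "r + 1 \<in> S \<longleftrightarrow> r + 1 \<in> S'" using top_agree[OF S _ eq S'] top_agree[OF S' _ eq[symmetric] S] by blast
  have fin: "finite S" "finite S'" using S S' by (auto intro: finite_subset)
  have "k \<in> S \<longleftrightarrow> k \<in> S'" for k
  proof (cases "1 \<le> k \<and> k \<le> r")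
    case True
    then show ?thesis using fun_cong[OF eq, of "(c, k)"] top
      by (auto simp: orbit_point_A_apply[OF fin(1)] orbit_point_A_apply[OF fin(2)] split: if_splits)
  next
    case False
    then show ?thesis using top S S' by (cases "k = r + 1") auto
  qed
  then show "S = S'" by blast
qed

lemma inj_on_orbit_point_C: "inj_on (orbit_point_C c) {(S, T). finite S \<and> T \<subseteq> S}"
proof (rule inj_onI)
  fix ST ST' assume "ST \<in> {(S, T). finite S \<and> T \<subseteq> S}" "ST' \<in> {(S, T). finite S \<and> T \<subseteq> S}"
    and eq: "orbit_point_C c ST = orbit_point_C c ST'"
  then obtain S T S' T' where ST: "ST = (S, T)" "ST' = (S', T')" "finite S" "T \<subseteq> S" "finite S'" "T' \<subseteq> S'"
    by auto
  have "S = {k. orbit_point_C c (S, T) (c, k) \<noteq> 0}" "T = {k. orbit_point_C c (S, T) (c, k) = 1}"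
    "S' = {k. orbit_point_C c (S', T') (c, k) \<noteq> 0}" "T' = {k. orbit_point_C c (S', T') (c, k) = 1}"
    using ST by (auto simp: orbit_point_C_apply)
  then show "ST = ST'" using eq ST by simp
qed

lemma orbit_sum_A:
  assumes c: "c < length comps" and t: "comps ! c = (TypeA, r)" and i: "i \<le> r"
  shows "(\<Sum>x\<in>weyl_orbit comps (fund_weight c i). monom x) = elem_sym (sym_var_A c r) 1 (r + 2) i"
proof -
  let ?I = "{S. S \<subseteq> {1..<r+2} \<and> card S = i}"
  have "(\<Sum>x\<in>weyl_orbit comps (fund_weight c i). monom x) = (\<Sum>S\<in>?I. monom (orbit_point_A c r S))"
    unfolding weyl_orbit_fund_weight_A[OF c t i]
    by (rule sum.reindex[OF inj_on_orbit_point_A[OF i], unfolded comp_def])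
  also have "\<dots> = (\<Sum>S\<in>?I. \<Prod>j\<in>S. sym_var_A c r j)"
  proof (rule sum.cong[OF refl])
    fix S assume "S \<in> ?I"
    then have "finite S" using finite_subset by auto
    then show "monom (orbit_point_A c r S) = (\<Prod>j\<in>S. sym_var_A c r j)"
      unfolding orbit_point_A_def sym_var_A_def by (rule monom_sum)
  qed
  finally show ?thesis by (simp add: elem_sym_def)
qed

lemma orbit_sum_C:
  assumes c: "c < length comps" and t: "comps ! c = (TypeC, r)" and i: "i \<le> r"
  shows "(\<Sum>x\<in>weyl_orbit comps (fund_weight c i). monom x) = elem_sym (sym_var_C c) 1 (r + 1) i"
proof -
  let ?I = "{S. S \<subseteq> {1..<r+1} \<and> card S = i}"
  let ?P = "{(S, T). S \<subseteq> {1..<r+1} \<and> card S = i \<and> T \<subseteq> S}"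
  have inj: "inj_on (orbit_point_C c) ?P"
    by (rule inj_on_subset[OF inj_on_orbit_point_C]) (auto intro: finite_subset)
  have "(\<Sum>x\<in>weyl_orbit comps (fund_weight c i). monom x) = (\<Sum>ST\<in>?P. monom (orbit_point_C c ST))"
    unfolding weyl_orbit_fund_weight_C[OF c t i] by (rule sum.reindex[OF inj, unfolded comp_def])
  also have "\<dots> = (\<Sum>(S, T)\<in>Sigma ?I Pow. monom (orbit_point_C c (S, T)))"
    by (rule sum.cong) auto
  also have "\<dots> = (\<Sum>S\<in>?I. \<Sum>T\<in>Pow S. monom (orbit_point_C c (S, T)))"
    by (rule sum.Sigma[symmetric]) (auto simp: finite_subsets_atLeastLessThan intro: finite_subset)
  also have "\<dots> = (\<Sum>S\<in>?I. \<Prod>j\<in>S. sym_var_C c j)"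
  proof (rule sum.cong[OF refl])
    fix S assume "S \<in> ?I"
    then have fS: "finite S" using finite_subset by auto
    have "(\<Sum>T\<in>Pow S. monom (orbit_point_C c (S, T))) =
        (\<Sum>T\<in>Pow S. (\<Prod>j\<in>T. monom (coord (c, j))) * (\<Prod>j\<in>S - T. monom (- coord (c, j))))"
    proof (rule sum.cong[OF refl])
      fix T assume "T \<in> Pow S"
      then have "finite T" using fS finite_subset by auto
      then show "monom (orbit_point_C c (S, T)) =
          (\<Prod>j\<in>T. monom (coord (c, j))) * (\<Prod>j\<in>S - T. monom (- coord (c, j)))"
        unfolding orbit_point_C_def using fS by (simp add: monom_add monom_sum)
    qed
    also have "\<dots> = (\<Prod>j\<in>S. sym_var_C c j)"
      unfolding sym_var_C_def by (rule prod_add[OF fS, symmetric])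
    finally show "(\<Sum>T\<in>Pow S. monom (orbit_point_C c (S, T))) = (\<Prod>j\<in>S. sym_var_C c j)" .
  qed
  finally show ?thesis by (simp add: elem_sym_def)
qed

text \<open>Coefficients of c(t) = \<Sum>_j |W\<omega>_j| t^j, the constant part of the generating series.\<close>

definition orbit_size_coeffs :: "(cartan_type \<times> nat) list \<Rightarrow> nat \<Rightarrow> nat \<Rightarrow> (weight \<Rightarrow>\<^sub>0 'r::comm_ring_1)" where
  "orbit_size_coeffs comps c j = (if j = 0 then 1 else of_nat (card (weyl_orbit comps (fund_weight c j))))"

lemma orbit_size_coeffs_in_group_ring: "orbit_size_coeffs comps c j \<in> group_ring (supported_on {})"
  unfolding orbit_size_coeffs_def
  using is_subring_1[OF is_subring_group_ring] is_subring_of_nat[OF is_subring_group_ring] by auto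

lemma reduce_component:
  assumes c: "c < length comps" and t: "comps ! c = (t, r)"
    and D: "\<And>j. 1 \<le> j \<Longrightarrow> j \<le> r \<Longrightarrow> (c, j) \<in> D" and one: "(1::'r::comm_ring_1) \<noteq> 0"
  shows "\<exists>F. GL_equiv (group_ring (supported_on D)) r
               (\<lambda>p. (rho comps (fund_weight c (Suc p)) :: weight \<Rightarrow>\<^sub>0 'r)) F \<and>
             (\<forall>p<r. flat_entry (coords_upto c (Suc p)) (c, Suc p) (F p))"
proof -
  let ?c0 = "orbit_size_coeffs comps c :: nat \<Rightarrow> weight \<Rightarrow>\<^sub>0 'r"
  have c0: "?c0 0 = 1" by (simp add: orbit_size_coeffs_def)
  have rho: "rho comps (fund_weight c (Suc p)) =
      (\<Sum>x\<in>weyl_orbit comps (fund_weight c (Suc p)). monom x) - ?c0 (Suc p)" for p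
    by (simp add: rho_def orbit_size_coeffs_def)
  show ?thesis
  proof (cases t)
    case TypeA
    then have "rho comps (fund_weight c (Suc p)) =
        elem_sym (sym_var_A c r) 1 (r + 2) (Suc p) - ?c0 (Suc p)" if "p < r" for p
      using orbit_sum_A[OF c _, of r "Suc p"] t that rho by simp
    then show ?thesis
      by (intro reduce_type_A[where ?c0.0 = ?c0 and c = c and r = r and D = D,
            OF c0 orbit_size_coeffs_in_group_ring D one])
  next
    case TypeC
    then have "rho comps (fund_weight c (Suc p)) =
        elem_sym (sym_var_C c) 1 (r + 1) (Suc p) - ?c0 (Suc p)" if "p < r" for p
      using orbit_sum_C[OF c _, of r "Suc p"] t that rho by simp
    then show ?thesis
      by (intro reduce_type_C[where ?c0.0 = ?c0 and c = c and r = r and D = D,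
            OF c0 orbit_size_coeffs_in_group_ring D one])
  qed
qed


section \<open>The coordinate basis\<close>

lemma sum_coord_apply:
  assumes d: "distinct l" and p: "p \<le> length l"
  shows "(\<Sum>j<p. zsmult (k j) (coord (l ! j))) y =
         (if y \<in> set (take p l) then k (THE j. j < p \<and> l ! j = y) else 0)"
proof -
  have "(\<Sum>j<p. zsmult (k j) (coord (l ! j))) y = (\<Sum>j<p. if l ! j = y then k j else 0)"
    unfolding sum_apply by (intro sum.cong) (auto simp: zsmult_def coord_def)
  also have "\<dots> = (if y \<in> set (take p l) then k (THE j. j < p \<and> l ! j = y) else 0)"
  proof (cases "y \<in> set (take p l)")
    case True
    then obtain j0 where j0: "j0 < p" "l ! j0 = y" using p by (auto simp: in_set_conv_nth)
    have u: "l ! j = y \<longleftrightarrow> j = j0" if "j < p" for j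
      using nth_eq_iff_index_eq[OF d, of j j0] j0 that p by auto
    then have "(THE j. j < p \<and> l ! j = y) = j0" using j0 by blast
    moreover have "(\<Sum>j<p. if l ! j = y then k j else 0) = (\<Sum>j<p. if j = j0 then k j else 0)"
      using u by (intro sum.cong) auto
    ultimately show ?thesis using True j0 by simp
  next
    case False
    then have "l ! j \<noteq> y" if "j < p" for j using that p by (auto simp: in_set_conv_nth)
    then show ?thesis using False by simp
  qed
  finally show ?thesis .
qed

lemma span_first_map_coord:
  assumes d: "distinct l" and p: "p \<le> length l"
  shows "span_first (map coord l) p = supported_on (set (take p l))"
proof (intro equalityI subsetI)
  fix v assume "v \<in> span_first (map coord l) p"
  then obtain k where v: "v = (\<Sum>j<p. zsmult (k j) (map coord l ! j))"
    by (auto simp: span_first_def)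
  have "v = (\<Sum>j<p. zsmult (k j) (coord (l ! j)))" unfolding v using p by (intro sum.cong) auto
  then show "v \<in> supported_on (set (take p l))"
    using sum_coord_apply[OF d p, of k] by (auto simp: supported_on_iff)
next
  fix v assume v: "v \<in> supported_on (set (take p l))"
  define k where "k j = v (l ! j)" for j
  have "v y = (\<Sum>j<p. zsmult (k j) (coord (l ! j))) y" for y
  proof (cases "y \<in> set (take p l)")
    case True
    then obtain j0 where j0: "j0 < p" "l ! j0 = y" using p by (auto simp: in_set_conv_nth)
    have "l ! j = y \<longleftrightarrow> j = j0" if "j < p" for j
      using nth_eq_iff_index_eq[OF d, of j j0] j0 that p by auto
    then have "(THE j. j < p \<and> l ! j = y) = j0" using j0 by blast
    then show ?thesis using sum_coord_apply[OF d p, of k y] True j0 by (simp add: k_def)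
  next
    case False
    then have "v y = 0" using v unfolding supported_on_iff by blast
    then show ?thesis using sum_coord_apply[OF d p, of k y] False by simp
  qed
  then have "v = (\<Sum>j<p. zsmult (k j) (map coord l ! j))"
    using p by (auto intro!: sum.cong)
  then show "v \<in> span_first (map coord l) p" by (auto simp: span_first_def)
qed

lemma is_Z_basis_map_coord:
  assumes d: "distinct l"
  shows "is_Z_basis (supported_on (set l)) (map coord l)"
  unfolding is_Z_basis_def
proof (intro conjI ballI)
  show "set (map coord l) \<subseteq> supported_on (set l)" by (auto intro: coord_in_supported_on)
next
  fix x assume "x \<in> supported_on (set l)"
  then obtain k where k: "x = (\<Sum>j<length l. zsmult (k j) (map coord l ! j))"
    using span_first_map_coord[OF d order_refl] by (auto simp: span_first_def)
  define k' where "k' j = (if j < length l then k j else 0)" for j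
  have ex: "(\<forall>i. length (map coord l) \<le> i \<longrightarrow> k' i = 0) \<and>
            x = (\<Sum>i<length (map coord l). zsmult (k' i) (map coord l ! i))"
    using k by (auto simp: k'_def intro!: sum.cong)
  have coeff: "x (l ! j) = k1 j"
    if "x = (\<Sum>i<length l. zsmult (k1 i) (map coord l ! i))" "j < length l" for k1 j
  proof -
    have "(THE i. i < length l \<and> l ! i = l ! j) = j"
      using \<open>j < length l\<close> nth_eq_iff_index_eq[OF d, of _ j] by (intro the_equality) auto
    moreover have "x = (\<Sum>i<length l. zsmult (k1 i) (coord (l ! i)))"
      using that(1) by (auto intro!: sum.cong)
    ultimately show ?thesis using sum_coord_apply[OF d order_refl, of k1 "l ! j"] \<open>j < length l\<close>
      by simp
  qed
  have "k1 = k'"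
    if "(\<forall>i. length (map coord l) \<le> i \<longrightarrow> k1 i = 0) \<and>
        x = (\<Sum>i<length (map coord l). zsmult (k1 i) (map coord l ! i))" for k1
  proof
    fix j show "k1 j = k' j"
    proof (cases "j < length l")
      case True
      then show ?thesis using coeff[of k1 j] coeff[of k' j] that ex by simp
    next
      case False
      then show ?thesis using that by (simp add: k'_def)
    qed
  qed
  with ex show "\<exists>!k. (\<forall>i. length (map coord l) \<le> i \<longrightarrow> k i = 0) \<and>
      x = (\<Sum>i<length (map coord l). zsmult (k i) (map coord l ! i))"
    by blast
qed

lemma flat_entry_imp_divisor:
  assumes d: "distinct l" and i: "i < length l"
    and F: "flat_entry (set (take (Suc i) l)) (l ! i) F"
  shows "F \<in> group_ring (span_first (map coord l) (Suc i)) \<and> is_divisor (map coord l) i F"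
proof
  show "F \<in> group_ring (span_first (map coord l) (Suc i))"
    using F span_first_map_coord[OF d, of "Suc i"] i by (simp add: flat_entry_def)
next
  let ?q = "l ! i"
  obtain \<nu> where \<nu>: "\<nu> \<in> supported_on (set (take (Suc i) l))" "Poly_Mapping.lookup F \<nu> = 1"
    "\<forall>x\<in>Poly_Mapping.keys F. \<nu> ?q \<le> x ?q \<and> (x ?q = \<nu> ?q \<longrightarrow> x = \<nu>)"
    using F unfolding flat_entry_def by blast
  define k where "k = \<nu> ?q"
  define \<mu> where "\<mu> = \<nu> - zsmult k (coord ?q)"
  have take_Suc: "set (take (Suc i) l) = insert ?q (set (take i l))"
    using i by (simp add: take_Suc_conv_app_nth)
  have q_notin: "?q \<notin> set (take i l)"
    using d i by (auto simp: in_set_conv_nth nth_eq_iff_index_eq)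
  have sp: "span_first (map coord l) i = supported_on (set (take i l))"
    using span_first_map_coord[OF d, of i] i by simp
  have bi: "map coord l ! i = coord ?q" using i by simp
  show "is_divisor (map coord l) i F"
    unfolding is_divisor_def
  proof (intro exI[of _ k] exI[of _ \<mu>] conjI ballI allI impI)
    show "\<mu> \<in> span_first (map coord l) i"
      using \<nu>(1) unfolding sp take_Suc supported_on_iff
      by (auto simp: \<mu>_def k_def zsmult_def coord_def)
    show "Poly_Mapping.lookup F (\<mu> + zsmult k (map coord l ! i)) = 1"
      using \<nu>(2) bi by (simp add: \<mu>_def)
  next
    fix x \<mu>' k' assume x: "x \<in> Poly_Mapping.keys F"
      and h: "\<mu>' \<in> span_first (map coord l) i \<and> x = \<mu>' + zsmult k' (map coord l ! i)"
    have "\<mu>' ?q = 0" using h q_notin unfolding sp supported_on_iff by blast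
    then have xq: "x ?q = k'" using h bi by (simp add: zsmult_def coord_def)
    show "k \<le> k'" using \<nu>(3) x xq by (auto simp: k_def)
    assume "k' = k"
    then have "x = \<nu>" using \<nu>(3) x xq by (auto simp: k_def)
    then show "\<mu>' = \<mu>" using h bi \<open>k' = k\<close> unfolding \<mu>_def by (simp add: algebra_simps)
  qed
qed

lemma gen_flat_of_GL_equiv:
  assumes d: "distinct l"
    and e: "GL_equiv (group_ring (supported_on (set l))) (length l) q F"
    and F: "\<forall>i<length l. flat_entry (set (take (Suc i) l)) (l ! i) (F i)"
  shows "gen_flat (supported_on (set l)) (map coord l) q"
proof -
  obtain A where A: "invertible_in (group_ring (supported_on (set l))) (length l) A"
    "\<forall>j<length l. F j = (\<Sum>i<length l. q i * A i j)"
    using e unfolding GL_equiv_def by blast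
  have "flat (map coord l) (\<lambda>j. \<Sum>i<length (map coord l). q i * A i j)"
    unfolding flat_def using A(2) F flat_entry_imp_divisor[OF d] by auto
  moreover have "in_GL (length (map coord l)) (supported_on (set l)) A"
    using A(1) by (simp add: in_GL_iff_invertible_in)
  ultimately show ?thesis unfolding gen_flat_def by blast
qed

definition component_coords :: "(cartan_type \<times> nat) list \<Rightarrow> nat \<Rightarrow> (nat \<times> nat) list" where
  "component_coords comps c = map (\<lambda>j. (c, j)) [1..<snd (comps ! c) + 1]"

definition coord_list :: "(cartan_type \<times> nat) list \<Rightarrow> nat \<Rightarrow> (nat \<times> nat) list" where
  "coord_list comps k = concat (map (component_coords comps) [0..<k])"

lemma coord_list_0: "coord_list comps 0 = []"
  by (simp add: coord_list_def)

lemma coord_list_Suc: "coord_list comps (Suc k) = coord_list comps k @ component_coords comps k"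
  by (simp add: coord_list_def)

lemma set_component_coords:
  "set (component_coords comps c) = {(c', j). c' = c \<and> 1 \<le> j \<and> j \<le> snd (comps ! c)}"
  by (auto simp: component_coords_def)

lemma length_component_coords: "length (component_coords comps c) = snd (comps ! c)"
  by (simp add: component_coords_def)

lemma nth_component_coords: "m < snd (comps ! c) \<Longrightarrow> component_coords comps c ! m = (c, Suc m)"
  by (simp add: component_coords_def del: upt_Suc)

lemma set_take_component_coords:
  "p \<le> snd (comps ! c) \<Longrightarrow> set (take p (component_coords comps c)) = coords_upto c p"
  by (auto simp: component_coords_def take_map coords_upto_def simp del: upt_Suc)

lemma set_coord_list: "set (coord_list comps k) = {(c, j). c < k \<and> 1 \<le> j \<and> j \<le> snd (comps ! c)}"
  by (induction k) (auto simp: coord_list_0 coord_list_Suc set_component_coords less_Suc_eq)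

lemma distinct_coord_list: "distinct (coord_list comps k)"
proof (induction k)
  case (Suc k)
  have "distinct (component_coords comps k)"
    by (simp add: component_coords_def distinct_map inj_on_def)
  moreover have "set (coord_list comps k) \<inter> set (component_coords comps k) = {}"
    by (auto simp: set_coord_list set_component_coords)
  ultimately show ?case using Suc by (simp add: coord_list_Suc)
qed (simp add: coord_list_0)

lemma fund_weights_eq:
  "fund_weights comps = map (\<lambda>(c, j). fund_weight c j) (coord_list comps (length comps))"
  unfolding fund_weights_def coord_list_def component_coords_def by (simp add: map_concat comp_def)

lemma weight_lattice_eq: "weight_lattice comps = supported_on (set (coord_list comps (length comps)))"
  unfolding weight_lattice_def supported_on_def set_coord_list by auto

lemma flat_entry_append:
  assumes "i < length l" "flat_entry (set (take (Suc i) l)) (l ! i) F"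
  shows "flat_entry (set (take (Suc i) (l @ l'))) ((l @ l') ! i) F"
  using assms by (simp add: nth_append)

lemma flat_entry_append_component:
  assumes p: "p < snd (comps ! k)" and F: "flat_entry (coords_upto k (Suc p)) (k, Suc p) F"
  shows "flat_entry (set (take (Suc (length l + p)) (l @ component_coords comps k)))
           ((l @ component_coords comps k) ! (length l + p)) F"
proof -
  have "coords_upto k (Suc p) \<subseteq> set (take (Suc (length l + p)) (l @ component_coords comps k))"
    using set_take_component_coords[of "Suc p" comps k] p by auto
  moreover have "(l @ component_coords comps k) ! (length l + p) = (k, Suc p)"
    using p by (simp add: nth_append nth_component_coords)
  ultimately show ?thesis using flat_entry_mono[OF _ F] by simp
qed

lemma reduce_components:
  fixes comps :: "(cartan_type \<times> nat) list"
  assumes one: "(1::'r::comm_ring_1) \<noteq> 0" and k: "k \<le> length comps"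
  defines "l \<equiv> coord_list comps k"
  shows "\<exists>F. GL_equiv (group_ring (supported_on (set (coord_list comps (length comps))))) (length l)
             (\<lambda>i. (rho comps (fund_weight (fst (l ! i)) (snd (l ! i))) :: weight \<Rightarrow>\<^sub>0 'r)) F \<and>
           (\<forall>i<length l. flat_entry (set (take (Suc i) l)) (l ! i) (F i))"
  using k unfolding l_def
proof (induction k)
  case 0
  show ?case by (intro exI[of _ "\<lambda>_. 0"]) (simp add: coord_list_0 GL_equiv_zero_length is_subring_group_ring)
next
  case (Suc k)
  let ?Q = "group_ring (supported_on (set (coord_list comps (length comps)))) :: (weight \<Rightarrow>\<^sub>0 'r) set"
  let ?l = "coord_list comps k" and ?b = "component_coords comps k"
  define n where "n = length ?l"
  define r where "r = snd (comps ! k)"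
  have Q: "is_subring ?Q" by (rule is_subring_group_ring)
  obtain F where F: "GL_equiv ?Q n (\<lambda>i. rho comps (fund_weight (fst (?l ! i)) (snd (?l ! i)))) F"
    "\<forall>i<n. flat_entry (set (take (Suc i) ?l)) (?l ! i) (F i)"
    using Suc unfolding n_def by auto
  have D: "(k, j) \<in> set (coord_list comps (length comps))" if "1 \<le> j" "j \<le> r" for j
    using that Suc.prems by (simp add: set_coord_list r_def)
  have "\<exists>G. GL_equiv ?Q r (\<lambda>p. rho comps (fund_weight k (Suc p))) G \<and>
      (\<forall>p<r. flat_entry (coords_upto k (Suc p)) (k, Suc p) (G p))"
    by (rule reduce_component[where t = "fst (comps ! k)", OF _ _ D one])
       (use Suc.prems in \<open>auto simp: r_def\<close>)
  then obtain G where G: "GL_equiv ?Q r (\<lambda>p. rho comps (fund_weight k (Suc p))) G"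
    "\<forall>p<r. flat_entry (coords_upto k (Suc p)) (k, Suc p) (G p)"
    by blast
  have len: "length (coord_list comps (Suc k)) = n + r"
    by (simp add: coord_list_Suc n_def length_component_coords r_def)
  have nth: "coord_list comps (Suc k) ! i = (if i < n then ?l ! i else (k, Suc (i - n)))"
    if "i < n + r" for i
    using that by (simp add: coord_list_Suc nth_append n_def nth_component_coords r_def)
  have flat: "flat_entry (set (take (Suc i) (coord_list comps (Suc k)))) (coord_list comps (Suc k) ! i)
      (if i < n then F i else G (i - n))" if "i < n + r" for i
  proof (cases "i < n")
    case True
    then have i: "i < length ?l" by (simp add: n_def)
    have "flat_entry (set (take (Suc i) (?l @ ?b))) ((?l @ ?b) ! i) (F i)"
      by (rule flat_entry_append[OF i]) (use F(2) i in \<open>simp add: n_def\<close>)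
    then show ?thesis using True unfolding coord_list_Suc by simp
  next
    case False
    define p where "p = i - n"
    have i: "i = length ?l + p" and p: "p < snd (comps ! k)"
      using False that by (auto simp: p_def n_def r_def)
    have "flat_entry (coords_upto k (Suc p)) (k, Suc p) (G p)" using G(2) p by (simp add: r_def)
    from flat_entry_append_component[OF p this, of ?l] show ?thesis
      unfolding coord_list_Suc i by (simp add: n_def)
  qed
  have "GL_equiv ?Q (n + r)
      (\<lambda>i. if i < n then rho comps (fund_weight (fst (?l ! i)) (snd (?l ! i)))
           else rho comps (fund_weight k (Suc (i - n))))
      (\<lambda>i. if i < n then F i else G (i - n))"
    by (rule GL_equiv_append[OF Q F(1) G(1)])
  then have "GL_equiv ?Q (n + r)
      (\<lambda>i. rho comps (fund_weight (fst (coord_list comps (Suc k) ! i)) (snd (coord_list comps (Suc k) ! i))))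
      (\<lambda>i. if i < n then F i else G (i - n))"
    by (rule GL_equiv_cong) (simp_all add: nth)
  with flat show ?case unfolding len by blast
qed

text \<open>Only 0 \<noteq> 1 is used: the argument works over every nontrivial commutative ring, and a
  component of rank 0 simply contributes no basis vectors.\<close>

theorem mainTheorem2:
  fixes comps :: "(cartan_type \<times> nat) list"
  assumes "surj (of_int :: int \<Rightarrow> 'r::comm_ring_1)"
      and "(0::'r) \<noteq> 1"
      and "\<forall>tr \<in> set comps. snd tr \<ge> 1"
  shows "\<exists>b. is_Z_basis (weight_lattice comps) b \<and>
             gen_flat (weight_lattice comps) b
               (\<lambda>i. (rho comps (fund_weights comps ! i) :: weight \<Rightarrow>\<^sub>0 'r))"
proof -
  let ?l = "coord_list comps (length comps)"
  have d: "distinct ?l" by (rule distinct_coord_list)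
  obtain F where F: "GL_equiv (group_ring (supported_on (set ?l))) (length ?l)
      (\<lambda>i. (rho comps (fund_weight (fst (?l ! i)) (snd (?l ! i))) :: weight \<Rightarrow>\<^sub>0 'r)) F"
      "\<forall>i<length ?l. flat_entry (set (take (Suc i) ?l)) (?l ! i) (F i)"
    using reduce_components[of "length comps" comps] assms(2) by auto
  have "GL_equiv (group_ring (supported_on (set ?l))) (length ?l)
      (\<lambda>i. (rho comps (fund_weights comps ! i) :: weight \<Rightarrow>\<^sub>0 'r)) F"
    using F(1) by (rule GL_equiv_cong) (simp_all add: fund_weights_eq case_prod_beta)
  then have "gen_flat (weight_lattice comps) (map coord ?l)
      (\<lambda>i. (rho comps (fund_weights comps ! i) :: weight \<Rightarrow>\<^sub>0 'r))"
    unfolding weight_lattice_eq using gen_flat_of_GL_equiv[OF d _ F(2)] by blast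
  moreover have "is_Z_basis (weight_lattice comps) (map coord ?l)"
    unfolding weight_lattice_eq by (rule is_Z_basis_map_coord[OF d])
  ultimately show ?thesis by blast
qed

end
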